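(* There is a computable equivalence structure that is computably bi-embeddably categorical but not computably categorical.
   Context: An equivalence structure $\mathcal{A}=(A,E)$ has universe $A\subseteq\omega$ and an equivalence relation $E$ on $A$; it is computable if its atomic diagram is computable. Two structures are bi-embeddable if each embeds into the other. A computable structure $\mathcal{A}$ is computably bi-embeddably categorical if every computable structure bi-embeddable with $\mathcal{A}$ is bi-embeddable with $\mathcal{A}$ via computable embeddings in both directions. A computable structure $\mathcal{A}$ is computably categorical if for every computable structure $\mathcal{B}$ isomorphic to $\mathcal{A}$ there is a computable isomorphism from $\mathcal{B}$ to $\mathcal{A}$. *)

theory Defs
  imports Main
begin

datatype recf =
    Zero
  | Succ
  | Proj nat
  | Comp recf "recf list"
  | Prec recf recf
  | Mn recf

inductive eval :: "recf \<Rightarrow> nat list \<Rightarrow> nat \<Rightarrow> bool" where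
  eval_Zero: "eval Zero xs 0"
| eval_Succ: "eval Succ (x # xs) (Suc x)"
| eval_Proj: "i < length xs \<Longrightarrow> eval (Proj i) xs (xs ! i)"
| eval_Comp: "list_all2 (\<lambda>g y. eval g xs y) gs ys \<Longrightarrow> eval f ys z \<Longrightarrow> eval (Comp f gs) xs z"
| eval_Prec0: "eval f xs y \<Longrightarrow> eval (Prec f g) (0 # xs) y"
| eval_PrecS: "eval (Prec f g) (n # xs) y \<Longrightarrow> eval g (y # n # xs) z
      \<Longrightarrow> eval (Prec f g) (Suc n # xs) z"
| eval_Mn: "eval f (n # xs) 0 \<Longrightarrow> (\<forall>m<n. \<exists>k. eval f (m # xs) (Suc k))
      \<Longrightarrow> eval (Mn f) xs n"

definition computable_fun :: "(nat \<Rightarrow> nat) \<Rightarrow> bool" where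
  "computable_fun f \<longleftrightarrow> (\<exists>c. \<forall>x. eval c [x] (f x))"

definition computable_set :: "nat set \<Rightarrow> bool" where
  "computable_set A \<longleftrightarrow> (\<exists>c. \<forall>x. eval c [x] (if x \<in> A then 1 else 0))"

definition computable_rel :: "(nat \<times> nat) set \<Rightarrow> bool" where
  "computable_rel R \<longleftrightarrow> (\<exists>c. \<forall>x y. eval c [x, y] (if (x, y) \<in> R then 1 else 0))"

definition eq_struct :: "nat set \<Rightarrow> (nat \<times> nat) set \<Rightarrow> bool" where
  "eq_struct A E \<longleftrightarrow> equiv A E"

text \<open>Computable: atomic diagram computable, i.e. universe and relation computable
  (equality on \<open>\<omega>\<close> is trivially decidable).\<close>
definition computable_eq_struct :: "nat set \<Rightarrow> (nat \<times> nat) set \<Rightarrow> bool" where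
  "computable_eq_struct A E \<longleftrightarrow> eq_struct A E \<and> computable_set A \<and> computable_rel E"

definition embedding :: "(nat \<Rightarrow> nat) \<Rightarrow> nat set \<Rightarrow> (nat \<times> nat) set
    \<Rightarrow> nat set \<Rightarrow> (nat \<times> nat) set \<Rightarrow> bool" where
  "embedding f A E B F \<longleftrightarrow> f ` A \<subseteq> B \<and> inj_on f A \<and>
     (\<forall>x\<in>A. \<forall>y\<in>A. (x, y) \<in> E \<longleftrightarrow> (f x, f y) \<in> F)"

definition isomorphism :: "(nat \<Rightarrow> nat) \<Rightarrow> nat set \<Rightarrow> (nat \<times> nat) set
    \<Rightarrow> nat set \<Rightarrow> (nat \<times> nat) set \<Rightarrow> bool" where
  "isomorphism f A E B F \<longleftrightarrow> embedding f A E B F \<and> f ` A = B"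

definition bi_embeddable :: "nat set \<Rightarrow> (nat \<times> nat) set \<Rightarrow> nat set \<Rightarrow> (nat \<times> nat) set \<Rightarrow> bool" where
  "bi_embeddable A E B F \<longleftrightarrow> (\<exists>f. embedding f A E B F) \<and> (\<exists>g. embedding g B F A E)"

definition comp_bi_embeddable :: "nat set \<Rightarrow> (nat \<times> nat) set \<Rightarrow> nat set \<Rightarrow> (nat \<times> nat) set \<Rightarrow> bool" where
  "comp_bi_embeddable A E B F \<longleftrightarrow>
     (\<exists>f. computable_fun f \<and> embedding f A E B F) \<and>
     (\<exists>g. computable_fun g \<and> embedding g B F A E)"

definition isomorphic :: "nat set \<Rightarrow> (nat \<times> nat) set \<Rightarrow> nat set \<Rightarrow> (nat \<times> nat) set \<Rightarrow> bool" where
  "isomorphic A E B F \<longleftrightarrow> (\<exists>f. isomorphism f A E B F)"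

definition comp_bi_emb_categorical :: "nat set \<Rightarrow> (nat \<times> nat) set \<Rightarrow> bool" where
  "comp_bi_emb_categorical A E \<longleftrightarrow>
     (\<forall>B F. computable_eq_struct B F \<longrightarrow> bi_embeddable A E B F \<longrightarrow> comp_bi_embeddable A E B F)"

definition comp_categorical :: "nat set \<Rightarrow> (nat \<times> nat) set \<Rightarrow> bool" where
  "comp_categorical A E \<longleftrightarrow>
     (\<forall>B F. computable_eq_struct B F \<longrightarrow> isomorphic A E B F \<longrightarrow>
        (\<exists>h. computable_fun h \<and> isomorphism h B F A E))"

end

theory Submission
  imports Defs "HOL-Library.Nat_Bijection" "HOL-Library.Infinite_Set"
begin

text \<open>
  The structure \<open>pairs_rel\<close> has infinitely many classes of size one and infinitely many of
  size two. Its computable copy \<open>halting_pairs_rel\<close> additionally joins two designated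
  singletons for every program \<open>e\<close> once a halting computation of \<open>e\<close> on its own code is
  found. Both still have infinitely many classes of each size, so they are isomorphic, but
  a computable isomorphism onto \<open>pairs_rel\<close> would decide the halting problem. Halting
  computations are certified by derivations in the big-step semantics \<open>eval\<close>, whose
  validity can be checked with bounded quantifiers only.

  Any structure bi-embeddable with \<open>pairs_rel\<close> embeds into it, so its classes have at
  most two elements, and \<open>pairs_rel\<close> embeds into it, so it has infinitely many classes of
  size two. If it is computable, sending each element to (a tag and) the least element of
  its class is a computable embedding into \<open>pairs_rel\<close>, and searching for two-element
  classes gives a computable embedding of \<open>pairs_rel\<close> into it.
\<close>

section \<open>Partial recursive functions\<close>

inductive_cases eval_ZeroE: "eval Zero xs y"
inductive_cases eval_SuccE: "eval Succ xs y"
inductive_cases eval_ProjE: "eval (Proj i) xs y"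
inductive_cases eval_CompE: "eval (Comp f gs) xs y"
inductive_cases eval_PrecE: "eval (Prec f g) xs y"
inductive_cases eval_MnE: "eval (Mn f) xs y"

lemma eval_deterministic: "eval c xs y \<Longrightarrow> eval c xs y' \<Longrightarrow> y = y'"
proof (induction arbitrary: y' rule: eval.induct)
  case (eval_Prec0 f xs y g)
  from eval_Prec0.prems show ?case by (cases rule: eval_PrecE) (use eval_Prec0.IH in auto)
next
  case (eval_Comp xs gs ys f z)
  from eval_Comp.prems obtain ys' where ys': "list_all2 (\<lambda>g y. eval g xs y) gs ys'"
    and z': "eval f ys' y'"
    by (cases rule: eval_CompE) auto
  have "ys = ys'"
    using eval_Comp.IH(1) ys'
    by (induction gs arbitrary: ys ys') (auto simp: list_all2_Cons1)
  then show ?case using eval_Comp.IH(2) z' by simp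
next
  case (eval_PrecS f g n xs y z)
  from eval_PrecS.prems obtain y0 where "eval (Prec f g) (n # xs) y0" "eval g (y0 # n # xs) y'"
    by (cases rule: eval_PrecE) auto
  then show ?case using eval_PrecS.IH by metis
next
  case (eval_Mn f n xs)
  from eval_Mn.prems obtain n' where n': "y' = n'" "eval f (n' # xs) 0"
    "\<forall>m<n'. \<exists>k. eval f (m # xs) (Suc k)"
    by (cases rule: eval_MnE) auto
  have "\<not> n < n'" and "\<not> n' < n"
    using n' eval_Mn.IH by (metis Zero_not_Suc)+
  then show ?case using n'(1) by simp
qed (auto elim: eval_ZeroE eval_SuccE eval_ProjE)

definition computable_nary :: "nat \<Rightarrow> (nat list \<Rightarrow> nat) \<Rightarrow> bool" where
  "computable_nary n f \<longleftrightarrow> (\<exists>c. \<forall>xs. length xs = n \<longrightarrow> eval c xs (f xs))"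

definition prog_of :: "nat \<Rightarrow> (nat list \<Rightarrow> nat) \<Rightarrow> recf" where
  "prog_of n f = (SOME c. \<forall>xs. length xs = n \<longrightarrow> eval c xs (f xs))"

lemma eval_prog_of: "computable_nary n f \<Longrightarrow> length xs = n \<Longrightarrow> eval (prog_of n f) xs (f xs)"
proof -
  assume "computable_nary n f" and "length xs = n"
  then show ?thesis
    unfolding computable_nary_def prog_of_def
    using someI_ex[of "\<lambda>c. \<forall>xs. length xs = n \<longrightarrow> eval c xs (f xs)"] by simp
qed

lemma computable_fun_iff_nary: "computable_fun f \<longleftrightarrow> computable_nary 1 (\<lambda>xs. f (xs ! 0))"
proof
  assume "computable_fun f"
  then obtain c where c: "\<And>x. eval c [x] (f x)" unfolding computable_fun_def by blast
  have "eval c xs (f (xs ! 0))" if "length xs = 1" for xs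
    using that c[of "xs ! 0"] by (auto simp: length_Suc_conv)
  then show "computable_nary 1 (\<lambda>xs. f (xs ! 0))" unfolding computable_nary_def by blast
next
  assume "computable_nary 1 (\<lambda>xs. f (xs ! 0))"
  then show "computable_fun f"
    unfolding computable_nary_def computable_fun_def by (metis One_nat_def length_Cons list.size(3) nth_Cons_0)
qed

definition computable_fun2 :: "(nat \<Rightarrow> nat \<Rightarrow> nat) \<Rightarrow> bool" where
  "computable_fun2 f \<longleftrightarrow> computable_nary 2 (\<lambda>xs. f (xs ! 0) (xs ! 1))"

lemma computable_rel_of_fun2:
  assumes "computable_fun2 (\<lambda>x y. of_bool ((x, y) \<in> R))" shows "computable_rel R"
proof -
  obtain c where c: "\<And>xs. length xs = 2 \<Longrightarrow> eval c xs (of_bool ((xs ! 0, xs ! 1) \<in> R))"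
    using assms unfolding computable_fun2_def computable_nary_def by blast
  have "eval c [x, y] (if (x, y) \<in> R then 1 else 0)" for x y
    using c[of "[x, y]"] by (simp add: of_bool_def)
  then show ?thesis unfolding computable_rel_def by blast
qed

lemma computable_fun2_of_rel:
  assumes "computable_rel R" shows "computable_fun2 (\<lambda>x y. of_bool ((x, y) \<in> R))"
proof -
  obtain c where c: "\<And>x y. eval c [x, y] (if (x, y) \<in> R then 1 else 0)"
    using assms unfolding computable_rel_def by blast
  have "eval c xs (of_bool ((xs ! 0, xs ! 1) \<in> R))" if "length xs = 2" for xs
    using that c[of "xs ! 0" "xs ! 1"] by (auto simp: numeral_2_eq_2 length_Suc_conv)
  then show ?thesis unfolding computable_fun2_def computable_nary_def by blast
qed

lemma computable_set_UNIV: "computable_set UNIV"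
  unfolding computable_set_def by (auto intro: eval_Succ eval_Zero eval_Comp[where ys="[0]"])

fun const_prog :: "nat \<Rightarrow> recf" where
  "const_prog 0 = Zero"
| "const_prog (Suc k) = Comp Succ [const_prog k]"

definition add_prog :: recf where "add_prog = Prec (Proj 0) (Comp Succ [Proj 0])"
definition pred_prog :: recf where "pred_prog = Prec Zero (Proj 1)"
definition monus_prog :: recf where "monus_prog = Prec (Proj 0) (Comp pred_prog [Proj 0])"
definition mult_prog :: recf where "mult_prog = Prec Zero (Comp add_prog [Proj 0, Proj 2])"

lemma eval_Proj_Cons: "eval (Proj 0) (x # xs) x" "eval (Proj (Suc i)) (x # xs) y \<longleftrightarrow> eval (Proj i) xs y"
  using eval_Proj[of 0 "x # xs"] eval_Proj[of "Suc i" "x # xs"] eval_Proj[of i xs]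
  by (auto elim!: eval_ProjE)

lemma eval_Comp1: "eval g xs y \<Longrightarrow> eval f [y] z \<Longrightarrow> eval (Comp f [g]) xs z"
  by (rule eval_Comp[where ys="[y]"]) auto

lemma eval_Comp2: "eval g1 xs y1 \<Longrightarrow> eval g2 xs y2 \<Longrightarrow> eval f [y1, y2] z \<Longrightarrow> eval (Comp f [g1, g2]) xs z"
  by (rule eval_Comp[where ys="[y1, y2]"]) auto

lemma eval_const_prog: "eval (const_prog k) xs k"
  by (induction k) (auto intro: eval_Zero eval_Comp1 eval_Succ)

lemma eval_add_prog: "eval add_prog [a, b] (a + b)"
  unfolding add_prog_def
  by (induction a) (auto intro: eval_Prec0 eval_PrecS eval_Comp1 eval_Succ eval_Proj_Cons)

lemma eval_pred_prog: "eval pred_prog [n] (n - 1)"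
  unfolding pred_prog_def
  by (induction n) (auto intro: eval_Prec0 eval_PrecS eval_Zero eval_Proj[of 1 "[_, _]", simplified])

lemma eval_monus_prog: "eval monus_prog [b, a] (a - b)"
  unfolding monus_prog_def
proof (induction b)
  case (Suc b)
  have "eval pred_prog [a - b] (a - Suc b)" using eval_pred_prog[of "a - b"] by simp
  then show ?case using Suc by (auto intro: eval_PrecS eval_Comp1 eval_Proj_Cons)
qed (auto intro: eval_Prec0 eval_Proj_Cons)

lemma eval_mult_prog: "eval mult_prog [a, b] (a * b)"
  unfolding mult_prog_def
proof (induction a)
  case (Suc a)
  have "eval add_prog [a * b, b] (Suc a * b)" using eval_add_prog[of "a * b" b] by (simp add: add.commute)
  moreover have "eval (Proj 2) [a * b, a, b] b" using eval_Proj[of 2 "[a * b, a, b]"] by simp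
  ultimately show ?case using Suc by (auto intro: eval_PrecS eval_Comp2 eval_Proj_Cons)
qed (auto intro: eval_Prec0 eval_Zero)

definition proj_progs :: "nat \<Rightarrow> nat \<Rightarrow> recf list" where
  "proj_progs k n = map (\<lambda>j. Proj (j + k)) [0..<n]"

lemma eval_proj_progs: "k + n \<le> length xs \<Longrightarrow>
  list_all2 (\<lambda>g y. eval g xs y) (proj_progs k n) (take n (drop k xs))"
  unfolding proj_progs_def
  by (auto simp: list_all2_conv_all_nth add.commute intro: eval_Proj[of _ xs, simplified])

definition sum_prog :: "recf \<Rightarrow> nat \<Rightarrow> recf" where
  "sum_prog body n = Prec Zero (Comp add_prog [Proj 0, Comp body (proj_progs 1 (Suc n))])"

definition iter_prog :: "recf \<Rightarrow> nat \<Rightarrow> recf" where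
  "iter_prog body n = Prec (Proj 0) (Comp body (Proj 0 # proj_progs 3 n))"

lemma eval_sum_prog:
  assumes body: "\<And>i. eval body (i # env) (f i)" and n: "length env = n"
  shows "eval (sum_prog body n) (m # env) (\<Sum>i<m. f i)"
  unfolding sum_prog_def
proof (induction m)
  case (Suc m)
  let ?s = "\<Sum>i<m. f i"
  have "eval (Comp body (proj_progs 1 (Suc n))) (?s # m # env) (f m)"
    using eval_proj_progs[of 1 "Suc n" "?s # m # env"] body[of m] n
    by (auto intro: eval_Comp[where ys="m # env"])
  then show ?case
    using Suc eval_add_prog[of ?s "f m"]
    by (auto intro: eval_PrecS eval_Comp2 eval_Proj_Cons)
qed (auto intro: eval_Prec0 eval_Zero)

lemma eval_iter_prog:
  assumes body: "\<And>v. eval body (v # env) (f v)" and n: "length env = n"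
  shows "eval (iter_prog body n) (m # x # env) ((f ^^ m) x)"
  unfolding iter_prog_def
proof (induction m)
  case (Suc m)
  let ?s = "(f ^^ m) x"
  have "list_all2 (\<lambda>g y. eval g (?s # m # x # env) y) (Proj 0 # proj_progs 3 n) (?s # env)"
    using eval_proj_progs[of 3 n "?s # m # x # env"] n by (auto intro: eval_Proj_Cons)
  then show ?case using Suc body[of ?s] by (auto intro: eval_PrecS eval_Comp)
qed (auto intro: eval_Prec0 eval_Proj_Cons)

text \<open>Variables are de Bruijn indices into the argument list (out-of-range variables evaluate
  to \<open>0\<close>); the bodies of \<open>ESum\<close> and \<open>EIter\<close> see the loop variable as \<open>EVar 0\<close>.
  Every well-formed expression compiles to a program, so a function is shown computable by
  writing it as an expression.\<close>

datatype expr = EVar nat | EConst nat | EAdd expr expr | EDiff expr expr | EMult expr expr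
  | ESum expr expr | EIter expr expr expr | ECall "nat list \<Rightarrow> nat" "expr list"

fun eval_expr :: "nat list \<Rightarrow> expr \<Rightarrow> nat" where
  "eval_expr env (EVar i) = (if i < length env then env ! i else 0)"
| "eval_expr env (EConst k) = k"
| "eval_expr env (EAdd a b) = eval_expr env a + eval_expr env b"
| "eval_expr env (EDiff a b) = eval_expr env a - eval_expr env b"
| "eval_expr env (EMult a b) = eval_expr env a * eval_expr env b"
| "eval_expr env (ESum b body) = (\<Sum>i<eval_expr env b. eval_expr (i # env) body)"
| "eval_expr env (EIter body m x) =
     ((\<lambda>v. eval_expr (v # env) body) ^^ (eval_expr env m)) (eval_expr env x)"
| "eval_expr env (ECall f args) = f (map (eval_expr env) args)"

fun wf_expr :: "expr \<Rightarrow> bool" where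
  "wf_expr (EAdd a b) = (wf_expr a \<and> wf_expr b)"
| "wf_expr (EDiff a b) = (wf_expr a \<and> wf_expr b)"
| "wf_expr (EMult a b) = (wf_expr a \<and> wf_expr b)"
| "wf_expr (ESum b body) = (wf_expr b \<and> wf_expr body)"
| "wf_expr (EIter body m x) = (wf_expr body \<and> wf_expr m \<and> wf_expr x)"
| "wf_expr (ECall f args) = (computable_nary (length args) f \<and> (\<forall>a\<in>set args. wf_expr a))"
| "wf_expr _ = True"

fun compile :: "nat \<Rightarrow> expr \<Rightarrow> recf" where
  "compile n (EVar i) = (if i < n then Proj i else Zero)"
| "compile n (EConst k) = const_prog k"
| "compile n (EAdd a b) = Comp add_prog [compile n a, compile n b]"
| "compile n (EDiff a b) = Comp monus_prog [compile n b, compile n a]"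
| "compile n (EMult a b) = Comp mult_prog [compile n a, compile n b]"
| "compile n (ESum b body) = Comp (sum_prog (compile (Suc n) body) n) (compile n b # proj_progs 0 n)"
| "compile n (EIter body m x) =
     Comp (iter_prog (compile (Suc n) body) n) (compile n m # compile n x # proj_progs 0 n)"
| "compile n (ECall f args) = Comp (prog_of (length args) f) (map (compile n) args)"

lemma eval_compile: "wf_expr e \<Longrightarrow> length env = n \<Longrightarrow> eval (compile n e) env (eval_expr env e)"
proof (induction e arbitrary: n env)
  case (ESum b body)
  have "eval (sum_prog (compile (Suc n) body) n) (eval_expr env b # env)
      (\<Sum>i<eval_expr env b. eval_expr (i # env) body)"
    using ESum.IH(2)[of "_ # env"] ESum.prems by (intro eval_sum_prog) auto
  then show ?case
    using ESum eval_proj_progs[of 0 n env] by (auto intro: eval_Comp[where ys="eval_expr env b # env"])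
next
  case (EIter body m x)
  have "eval (iter_prog (compile (Suc n) body) n) (eval_expr env m # eval_expr env x # env)
      (((\<lambda>v. eval_expr (v # env) body) ^^ eval_expr env m) (eval_expr env x))"
    using EIter.IH(1)[of "_ # env"] EIter.prems by (intro eval_iter_prog) auto
  then show ?case
    using EIter eval_proj_progs[of 0 n env]
    by (auto intro: eval_Comp[where ys="eval_expr env m # eval_expr env x # env"])
next
  case (ECall f args)
  have "list_all2 (\<lambda>g y. eval g env y) (map (compile n) args) (map (eval_expr env) args)"
    using ECall by (auto simp: list_all2_conv_all_nth)
  moreover have "eval (prog_of (length args) f) (map (eval_expr env) args) (f (map (eval_expr env) args))"
    using ECall.prems by (intro eval_prog_of) auto
  ultimately show ?case by (auto intro: eval_Comp)
next
  case (EAdd a b)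
  then show ?case by (auto intro: eval_Comp2[OF _ _ eval_add_prog])
next
  case (EDiff a b)
  then show ?case by (auto intro: eval_Comp2[OF _ _ eval_monus_prog])
next
  case (EMult a b)
  then show ?case by (auto intro: eval_Comp2[OF _ _ eval_mult_prog])
qed (auto intro: eval_Proj eval_Zero eval_const_prog)

lemma computable_naryI:
  "wf_expr e \<Longrightarrow> (\<And>xs. length xs = n \<Longrightarrow> eval_expr xs e = f xs) \<Longrightarrow> computable_nary n f"
  unfolding computable_nary_def using eval_compile by metis

lemma computable_funI: "wf_expr e \<Longrightarrow> (\<And>a. eval_expr [a] e = f a) \<Longrightarrow> computable_fun f"
  unfolding computable_fun_iff_nary by (rule computable_naryI[where e=e]) (auto simp: length_Suc_conv)

lemma computable_fun2I:
  "wf_expr e \<Longrightarrow> (\<And>a b. eval_expr [a, b] e = f a b) \<Longrightarrow> computable_fun2 f"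
  unfolding computable_fun2_def
  by (rule computable_naryI[where e=e]) (auto simp: length_Suc_conv numeral_eq_Suc)

definition ECall1 :: "(nat \<Rightarrow> nat) \<Rightarrow> expr \<Rightarrow> expr" where
  "ECall1 f a = ECall (\<lambda>xs. f (xs ! 0)) [a]"

definition ECall2 :: "(nat \<Rightarrow> nat \<Rightarrow> nat) \<Rightarrow> expr \<Rightarrow> expr \<Rightarrow> expr" where
  "ECall2 f a b = ECall (\<lambda>xs. f (xs ! 0) (xs ! 1)) [a, b]"

lemma wf_expr_ECall1[simp]: "wf_expr (ECall1 f a) \<longleftrightarrow> computable_fun f \<and> wf_expr a"
  by (simp add: ECall1_def computable_fun_iff_nary)

lemma wf_expr_ECall2[simp]: "wf_expr (ECall2 f a b) \<longleftrightarrow> computable_fun2 f \<and> wf_expr a \<and> wf_expr b"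
  by (simp add: ECall2_def computable_fun2_def flip: numeral_2_eq_2)

lemma eval_expr_ECall1[simp]: "eval_expr env (ECall1 f a) = f (eval_expr env a)"
  by (simp add: ECall1_def)

lemma eval_expr_ECall2[simp]: "eval_expr env (ECall2 f a b) = f (eval_expr env a) (eval_expr env b)"
  by (simp add: ECall2_def)

lemma computable_nary_4I:
  "wf_expr e \<Longrightarrow> (\<And>a b c d. eval_expr [a, b, c, d] e = f [a, b, c, d]) \<Longrightarrow> computable_nary 4 f"
  by (rule computable_naryI[where e=e]) (auto simp: length_Suc_conv numeral_eq_Suc)

lemma computable_nary_5I:
  "wf_expr e \<Longrightarrow> (\<And>a b c d g. eval_expr [a, b, c, d, g] e = f [a, b, c, d, g]) \<Longrightarrow>
   computable_nary 5 f"
  by (rule computable_naryI[where e=e]) (auto simp: length_Suc_conv numeral_eq_Suc)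

definition ESgn :: "expr \<Rightarrow> expr" where "ESgn a = EDiff (EConst 1) (EDiff (EConst 1) a)"
definition ENot :: "expr \<Rightarrow> expr" where "ENot a = EDiff (EConst 1) a"
definition EEq :: "expr \<Rightarrow> expr \<Rightarrow> expr" where "EEq a b = ENot (EAdd (EDiff a b) (EDiff b a))"
definition ELess :: "expr \<Rightarrow> expr \<Rightarrow> expr" where "ELess a b = ESgn (EDiff b a)"
definition EAnd :: "expr \<Rightarrow> expr \<Rightarrow> expr" where "EAnd a b = ESgn (EMult a b)"
definition EOr :: "expr \<Rightarrow> expr \<Rightarrow> expr" where "EOr a b = ESgn (EAdd a b)"
definition EEx :: "expr \<Rightarrow> expr \<Rightarrow> expr" where "EEx b body = ESgn (ESum b body)"
definition EAll :: "expr \<Rightarrow> expr \<Rightarrow> expr" where "EAll b body = ENot (ESum b (ENot body))"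
definition EIf :: "expr \<Rightarrow> expr \<Rightarrow> expr \<Rightarrow> expr" where
  "EIf c a b = EAdd (EMult (ENot c) a) (EMult (ESgn c) b)"

lemmas expr_connective_defs = ESgn_def ENot_def EEq_def ELess_def EAnd_def EOr_def EEx_def EAll_def EIf_def

lemma wf_expr_connectives[simp]:
  "wf_expr (ESgn a) = wf_expr a" "wf_expr (ENot a) = wf_expr a"
  "wf_expr (EEq a b) = (wf_expr a \<and> wf_expr b)" "wf_expr (ELess a b) = (wf_expr a \<and> wf_expr b)"
  "wf_expr (EAnd a b) = (wf_expr a \<and> wf_expr b)" "wf_expr (EOr a b) = (wf_expr a \<and> wf_expr b)"
  "wf_expr (EEx a b) = (wf_expr a \<and> wf_expr b)" "wf_expr (EAll a b) = (wf_expr a \<and> wf_expr b)"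
  "wf_expr (EIf c a b) = (wf_expr c \<and> wf_expr a \<and> wf_expr b)"
  by (auto simp: expr_connective_defs)

lemma eval_expr_ESgn[simp]:
  "eval_expr env (ESgn a) = of_bool (eval_expr env a \<noteq> 0)"
  by (auto simp: ESgn_def)

lemma eval_expr_ENot[simp]:
  "eval_expr env (ENot a) = of_bool (eval_expr env a = 0)"
  by (auto simp: ENot_def)

lemma eval_expr_EEq[simp]:
  "eval_expr env (EEq a b) = of_bool (eval_expr env a = eval_expr env b)"
  by (auto simp: EEq_def)

lemma eval_expr_ELess[simp]:
  "eval_expr env (ELess a b) = of_bool (eval_expr env a < eval_expr env b)"
  by (auto simp: ELess_def)

lemma eval_expr_EAnd[simp]:
  "eval_expr env (EAnd a b) = of_bool (eval_expr env a \<noteq> 0 \<and> eval_expr env b \<noteq> 0)"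
  by (auto simp: EAnd_def)

lemma eval_expr_EOr[simp]:
  "eval_expr env (EOr a b) = of_bool (eval_expr env a \<noteq> 0 \<or> eval_expr env b \<noteq> 0)"
  by (auto simp: EOr_def)

lemma eval_expr_EEx[simp]:
  "eval_expr env (EEx b body) = of_bool (\<exists>i<eval_expr env b. eval_expr (i # env) body \<noteq> 0)"
  by (auto simp: EEx_def)

lemma eval_expr_EAll[simp]:
  "eval_expr env (EAll b body) = of_bool (\<forall>i<eval_expr env b. eval_expr (i # env) body \<noteq> 0)"
  by (auto simp: EAll_def)

lemma eval_expr_EIf[simp]:
  "eval_expr env (EIf c a b) = (if eval_expr env c = 0 then eval_expr env a else eval_expr env b)"
  by (auto simp: EIf_def)

lemma computable_fun_compose: "computable_fun f \<Longrightarrow> computable_fun g \<Longrightarrow> computable_fun (\<lambda>x. f (g x))"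
  by (rule computable_funI[where e="ECall1 f (ECall1 g (EVar 0))"]) simp_all

lemma computable_fun2_eq: "computable_fun2 (\<lambda>x y. of_bool (x = y))"
  by (rule computable_fun2I[where e="EEq (EVar 0) (EVar 1)"]) simp_all

lemma computable_fun2_disj:
  assumes "computable_fun2 (\<lambda>x y. of_bool (P x y))" "computable_fun2 (\<lambda>x y. of_bool (Q x y))"
  shows "computable_fun2 (\<lambda>x y. of_bool (P x y \<or> Q x y))"
  using assms
  by (intro computable_fun2I[where e="EOr (ECall2 (\<lambda>x y. of_bool (P x y)) (EVar 0) (EVar 1))
      (ECall2 (\<lambda>x y. of_bool (Q x y)) (EVar 0) (EVar 1))"]) simp_all

lemma computable_Least:
  assumes P: "computable_fun2 (\<lambda>w z. of_bool (P w z))" and ex: "\<And>w. \<exists>z. P w z"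
  shows "computable_fun (\<lambda>w. LEAST z. P w z)"
proof -
  have "computable_fun2 (\<lambda>z w. of_bool (\<not> P w z))"
    using P by (intro computable_fun2I[where e="ENot (ECall2 (\<lambda>w z. of_bool (P w z)) (EVar 1) (EVar 0))"])
      simp_all
  then obtain c where "\<forall>xs. length xs = 2 \<longrightarrow> eval c xs (of_bool (\<not> P (xs ! 1) (xs ! 0)))"
    unfolding computable_fun2_def computable_nary_def by blast
  then have c: "eval c [z, w] (of_bool (\<not> P w z))" for z w by (auto dest: spec[of _ "[z, w]"])
  have "eval (Mn c) [w] (LEAST z. P w z)" for w
  proof (rule eval_Mn)
    show "eval c [LEAST z. P w z, w] 0" using c LeastI_ex[OF ex] by (metis of_bool_eq(1))
    show "\<forall>m<(LEAST z. P w z). \<exists>k. eval c [m, w] (Suc k)"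
      using c not_less_Least by (metis of_bool_eq(2) One_nat_def)
  qed
  then show ?thesis unfolding computable_fun_def by blast
qed

section \<open>Coding pairs, lists and programs by numbers\<close>

definition npair :: "nat \<Rightarrow> nat \<Rightarrow> nat" where "npair x y = prod_encode (x, y)"
definition nfst :: "nat \<Rightarrow> nat" where "nfst z = fst (prod_decode z)"
definition nsnd :: "nat \<Rightarrow> nat" where "nsnd z = snd (prod_decode z)"

lemma nfst_npair[simp]: "nfst (npair x y) = x" by (simp add: nfst_def npair_def)
lemma nsnd_npair[simp]: "nsnd (npair x y) = y" by (simp add: nsnd_def npair_def)
lemma npair_nfst_nsnd[simp]: "npair (nfst z) (nsnd z) = z" by (simp add: nfst_def nsnd_def npair_def)
lemma npair_eq_iff[simp]: "npair a b = npair c d \<longleftrightarrow> a = c \<and> b = d" by (simp add: npair_def)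

lemma nat_eq_iff_nfst_nsnd: "x = y \<longleftrightarrow> nfst x = nfst y \<and> nsnd x = nsnd y"
  by (metis npair_nfst_nsnd)

lemma npair_ge_fst: "a \<le> npair a b" by (simp add: npair_def le_prod_encode_1)
lemma npair_ge_snd: "b \<le> npair a b" by (simp add: npair_def le_prod_encode_2)
lemma nfst_le: "nfst z \<le> z" by (metis npair_ge_fst npair_nfst_nsnd)
lemma nsnd_le: "nsnd z \<le> z" by (metis npair_ge_snd npair_nfst_nsnd)

lemma add_le_npair: "a + b \<le> npair a b"
proof -
  have "n \<le> triangle n" for n by (induction n) auto
  from this[of "a + b"] show ?thesis by (simp add: npair_def prod_encode_def)
qed

lemma nsnd_less: "nfst c \<noteq> 0 \<Longrightarrow> nsnd c < c"
  using add_le_npair[of "nfst c" "nsnd c"] by simp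

lemma nfst_nsnd_less: "nfst c \<noteq> 0 \<Longrightarrow> nfst (nsnd c) < c"
  using nsnd_less nfst_le le_less_trans by blast

lemma nsnd_nsnd_less: "nfst c \<noteq> 0 \<Longrightarrow> nsnd (nsnd c) < c"
  using nsnd_less nsnd_le le_less_trans by blast

lemma computable_npair[simp]: "computable_fun2 npair"
proof (rule computable_fun2I)
  let ?e = "EAdd (ESum (EAdd (EAdd (EVar 0) (EVar 1)) (EConst 1)) (EVar 0)) (EVar 0)"
  show "wf_expr ?e" by simp
  have "(\<Sum>i<Suc n. i) = triangle n" for n by (induction n) auto
  then show "eval_expr [a, b] ?e = npair a b" for a b by (simp add: npair_def prod_encode_def)
qed

text \<open>The projections are computed by bounded search: the only pair \<open>x, y \<le> z\<close> with
  \<open>npair x y = z\<close> is \<open>nfst z, nsnd z\<close>.\<close>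

lemma sum_npair_search:
  "(\<Sum>x<Suc z. \<Sum>y<Suc z. of_bool (npair x y = z) * g x y) = (g (nfst z) (nsnd z) :: nat)"
proof -
  have bounds: "nfst z < Suc z" "nsnd z < Suc z" using nfst_le[of z] nsnd_le[of z] by auto
  have "npair x y = z \<longleftrightarrow> x = nfst z \<and> y = nsnd z" for x y by auto
  then have "(\<Sum>x<Suc z. \<Sum>y<Suc z. of_bool (npair x y = z) * g x y)
      = (\<Sum>x<Suc z. if x = nfst z then (\<Sum>y<Suc z. if y = nsnd z then g x y else 0) else 0)"
    by (intro sum.cong) (auto intro!: sum.neutral)
  also have "\<dots> = g (nfst z) (nsnd z)" using bounds by (simp add: sum.delta')
  finally show ?thesis .
qed

lemma computable_nfst[simp]: "computable_fun nfst"
proof (rule computable_funI)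
  let ?e = "ESum (EAdd (EVar 0) (EConst 1)) (ESum (EAdd (EVar 1) (EConst 1))
    (EMult (EEq (ECall2 npair (EVar 1) (EVar 0)) (EVar 2)) (EVar 1)))"
  show "wf_expr ?e" by simp
  show "eval_expr [z] ?e = nfst z" for z
    using sum_npair_search[of z "\<lambda>x y. x"] by simp
qed

lemma computable_nsnd[simp]: "computable_fun nsnd"
proof (rule computable_funI)
  let ?e = "ESum (EAdd (EVar 0) (EConst 1)) (ESum (EAdd (EVar 1) (EConst 1))
    (EMult (EEq (ECall2 npair (EVar 1) (EVar 0)) (EVar 2)) (EVar 0)))"
  show "wf_expr ?e" by simp
  show "eval_expr [z] ?e = nsnd z" for z
    using sum_npair_search[of z "\<lambda>x y. y"] by simp
qed

definition ncons :: "nat \<Rightarrow> nat \<Rightarrow> nat" where "ncons x l = Suc (npair x l)"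
definition nhd :: "nat \<Rightarrow> nat" where "nhd l = nfst (l - 1)"
definition ntl :: "nat \<Rightarrow> nat" where "ntl l = nsnd (l - 1)"

lemma nhd_ncons[simp]: "nhd (ncons x l) = x" by (simp add: nhd_def ncons_def)
lemma ntl_ncons[simp]: "ntl (ncons x l) = l" by (simp add: ntl_def ncons_def)
lemma ncons_eq_iff[simp]: "ncons a b = ncons c d \<longleftrightarrow> a = c \<and> b = d" by (simp add: ncons_def)
lemma ncons_nonzero[simp]: "ncons x l \<noteq> 0" by (simp add: ncons_def)
lemma ntl_0[simp]: "ntl 0 = 0" using nsnd_le[of 0] by (simp add: ntl_def)

lemma list_encode_Cons[simp]: "list_encode (x # xs) = ncons x (list_encode xs)"
  by (simp add: ncons_def npair_def)

declare list_encode.simps(2)[simp del]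

lemma list_decode_ncons[simp]: "list_decode (ncons x l) = x # list_decode l"
  by (simp add: ncons_def npair_def)

lemma list_decode_nonzero: "l \<noteq> 0 \<Longrightarrow> list_decode l = nhd l # list_decode (ntl l)"
  by (cases l) (auto simp: nhd_def ntl_def nfst_def nsnd_def split: prod.split)

lemma list_encode_eq_0_iff: "list_encode xs = 0 \<longleftrightarrow> xs = []"
  by (cases xs) auto

lemma list_decode_less: "x \<in> set (list_decode n) \<Longrightarrow> x < n"
proof (induction n rule: list_decode.induct)
  case (2 n)
  obtain a b where n: "prod_decode n = (a, b)" by fastforce
  then have "a \<le> n" "b \<le> n"
    using prod_decode_inverse[of n] by (metis le_prod_encode_1 le_prod_encode_2)+
  then show ?case using 2 n by auto
qed simp

lemma length_le_list_encode: "length xs \<le> list_encode xs"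
  by (induction xs) (auto simp: Suc_le_eq ncons_def intro: le_less_trans npair_ge_snd)

definition ntl_pow :: "nat \<Rightarrow> nat \<Rightarrow> nat" where "ntl_pow l i = (ntl ^^ i) l"
definition nnth :: "nat \<Rightarrow> nat \<Rightarrow> nat" where "nnth l i = nhd (ntl_pow l i)"
definition nlength :: "nat \<Rightarrow> nat" where "nlength l = (\<Sum>i<l. of_bool (ntl_pow l i \<noteq> 0))"

lemma ntl_pow_list_encode: "ntl_pow (list_encode xs) i = list_encode (drop i xs)"
  unfolding ntl_pow_def
proof (induction xs arbitrary: i)
  case Nil
  have "(ntl ^^ i) 0 = 0" by (induction i) auto
  then show ?case by simp
next
  case (Cons x xs)
  then show ?case by (cases i) (auto simp: funpow_Suc_right simp del: funpow.simps)
qed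

lemma nnth_list_encode: "i < length xs \<Longrightarrow> nnth (list_encode xs) i = xs ! i"
  by (simp add: nnth_def ntl_pow_list_encode Cons_nth_drop_Suc[symmetric])

lemma nlength_list_encode: "nlength (list_encode xs) = length xs"
proof -
  have "{i. i < list_encode xs \<and> ntl_pow (list_encode xs) i \<noteq> 0} = {..<length xs}"
    using length_le_list_encode[of xs] by (auto simp: ntl_pow_list_encode list_encode_eq_0_iff)
  then show ?thesis by (simp add: nlength_def Int_def flip: lessThan_def)
qed

lemma nlength_eq: "nlength l = length (list_decode l)"
  by (metis list_decode_inverse nlength_list_encode)

lemma nnth_eq: "i < length (list_decode l) \<Longrightarrow> nnth l i = list_decode l ! i"
  by (metis list_decode_inverse nnth_list_encode)

lemma computable_ncons[simp]: "computable_fun2 ncons"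
  by (rule computable_fun2I[where e="EAdd (ECall2 npair (EVar 0) (EVar 1)) (EConst 1)"])
    (simp_all add: ncons_def)

lemma computable_ntl[simp]: "computable_fun ntl"
  by (rule computable_funI[where e="ECall1 nsnd (EDiff (EVar 0) (EConst 1))"]) (simp_all add: ntl_def)

lemma computable_nhd[simp]: "computable_fun nhd"
  by (rule computable_funI[where e="ECall1 nfst (EDiff (EVar 0) (EConst 1))"]) (simp_all add: nhd_def)

lemma computable_ntl_pow[simp]: "computable_fun2 ntl_pow"
  by (rule computable_fun2I[where e="EIter (ECall1 ntl (EVar 0)) (EVar 1) (EVar 0)"])
    (simp_all add: ntl_pow_def)

lemma computable_nnth[simp]: "computable_fun2 nnth"
  by (rule computable_fun2I[where e="ECall1 nhd (ECall2 ntl_pow (EVar 0) (EVar 1))"])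
    (simp_all add: nnth_def)

lemma computable_nlength[simp]: "computable_fun nlength"
  by (rule computable_funI[where e="ESum (EVar 0) (ENot (EEq (ECall2 ntl_pow (EVar 1) (EVar 0)) (EConst 0)))"])
    (simp_all add: nlength_def)

fun encode_recf :: "recf \<Rightarrow> nat" where
  "encode_recf Zero = npair 0 0"
| "encode_recf Succ = npair 1 0"
| "encode_recf (Proj i) = npair 2 i"
| "encode_recf (Comp f gs) = npair 3 (npair (encode_recf f) (list_encode (map encode_recf gs)))"
| "encode_recf (Prec f g) = npair 4 (npair (encode_recf f) (encode_recf g))"
| "encode_recf (Mn f) = npair 5 (encode_recf f)"

function decode_recf :: "nat \<Rightarrow> recf" where
  "decode_recf c =
     (if nfst c = 0 then Zero
      else if nfst c = 1 then Succ
      else if nfst c = 2 then Proj (nsnd c)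
      else if nfst c = 3 then
        Comp (decode_recf (nfst (nsnd c))) (map decode_recf (list_decode (nsnd (nsnd c))))
      else if nfst c = 4 then Prec (decode_recf (nfst (nsnd c))) (decode_recf (nsnd (nsnd c)))
      else if nfst c = 5 then Mn (decode_recf (nsnd c))
      else Zero)"
  by pat_completeness auto
termination
  by (relation "measure id")
    (auto simp: nsnd_less nfst_nsnd_less nsnd_nsnd_less dest!: list_decode_less
      intro: less_trans[OF _ nsnd_nsnd_less])

declare decode_recf.simps[simp del]

lemma decode_recf_cases:
  "nfst c = 0 \<Longrightarrow> decode_recf c = Zero"
  "nfst c = 1 \<Longrightarrow> decode_recf c = Succ"
  "nfst c = 2 \<Longrightarrow> decode_recf c = Proj (nsnd c)"
  "nfst c = 3 \<Longrightarrow>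
     decode_recf c = Comp (decode_recf (nfst (nsnd c))) (map decode_recf (list_decode (nsnd (nsnd c))))"
  "nfst c = 4 \<Longrightarrow> decode_recf c = Prec (decode_recf (nfst (nsnd c))) (decode_recf (nsnd (nsnd c)))"
  "nfst c = 5 \<Longrightarrow> decode_recf c = Mn (decode_recf (nsnd c))"
  by (simp_all add: decode_recf.simps[of c])

lemma decode_encode_recf[simp]: "decode_recf (encode_recf f) = f"
  by (induction f) (simp_all add: decode_recf_cases map_idI)

section \<open>Halting certificates\<close>

text \<open>A judgment \<open>mk_judgment c x y h\<close> claims that the program coded by \<open>c\<close> on the argument
  list coded by \<open>x\<close> halts with output \<open>y\<close>; \<open>h\<close> codes the list of intermediate values of
  a composition and is ignored by the other rules. The rules are parametrised by the premise
  quantifier \<open>Q\<close>: \<open>Q P\<close> says that some available premise satisfies \<open>P\<close>.\<close>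

definition jprog :: "nat \<Rightarrow> nat" where "jprog j = nfst j"
definition jargs :: "nat \<Rightarrow> nat" where "jargs j = nfst (nsnd j)"
definition jval :: "nat \<Rightarrow> nat" where "jval j = nfst (nsnd (nsnd j))"
definition jaux :: "nat \<Rightarrow> nat" where "jaux j = nsnd (nsnd (nsnd j))"

definition mk_judgment :: "nat \<Rightarrow> nat \<Rightarrow> nat \<Rightarrow> nat \<Rightarrow> nat" where
  "mk_judgment c x y h = npair c (npair x (npair y h))"

lemma judgment_sel[simp]:
  "jprog (mk_judgment c x y h) = c" "jargs (mk_judgment c x y h) = x"
  "jval (mk_judgment c x y h) = y" "jaux (mk_judgment c x y h) = h"
  by (simp_all add: jprog_def jargs_def jval_def jaux_def mk_judgment_def)

definition infer_zero :: "((nat \<Rightarrow> bool) \<Rightarrow> bool) \<Rightarrow> nat \<Rightarrow> bool" where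
  "infer_zero Q j \<longleftrightarrow> nfst (jprog j) = 0 \<and> jval j = 0"

definition infer_succ :: "((nat \<Rightarrow> bool) \<Rightarrow> bool) \<Rightarrow> nat \<Rightarrow> bool" where
  "infer_succ Q j \<longleftrightarrow> nfst (jprog j) = 1 \<and> jargs j \<noteq> 0 \<and> jval j = Suc (nhd (jargs j))"

definition infer_proj :: "((nat \<Rightarrow> bool) \<Rightarrow> bool) \<Rightarrow> nat \<Rightarrow> bool" where
  "infer_proj Q j \<longleftrightarrow> nfst (jprog j) = 2 \<and> nsnd (jprog j) < nlength (jargs j)
     \<and> jval j = nnth (jargs j) (nsnd (jprog j))"

definition infer_comp :: "((nat \<Rightarrow> bool) \<Rightarrow> bool) \<Rightarrow> nat \<Rightarrow> bool" where
  "infer_comp Q j \<longleftrightarrow> nfst (jprog j) = 3 \<and> nlength (jaux j) = nlength (nsnd (nsnd (jprog j)))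
     \<and> (\<forall>m<nlength (nsnd (nsnd (jprog j))).
          Q (\<lambda>j'. jprog j' = nnth (nsnd (nsnd (jprog j))) m \<and> jargs j' = jargs j
                 \<and> jval j' = nnth (jaux j) m))
     \<and> Q (\<lambda>j'. jprog j' = nfst (nsnd (jprog j)) \<and> jargs j' = jaux j \<and> jval j' = jval j)"

definition infer_prec0 :: "((nat \<Rightarrow> bool) \<Rightarrow> bool) \<Rightarrow> nat \<Rightarrow> bool" where
  "infer_prec0 Q j \<longleftrightarrow> nfst (jprog j) = 4 \<and> jargs j \<noteq> 0 \<and> nhd (jargs j) = 0
     \<and> Q (\<lambda>j'. jprog j' = nfst (nsnd (jprog j)) \<and> jargs j' = ntl (jargs j) \<and> jval j' = jval j)"

definition infer_precS :: "((nat \<Rightarrow> bool) \<Rightarrow> bool) \<Rightarrow> nat \<Rightarrow> bool" where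
  "infer_precS Q j \<longleftrightarrow> nfst (jprog j) = 4 \<and> jargs j \<noteq> 0 \<and> nhd (jargs j) \<noteq> 0
     \<and> Q (\<lambda>j1. jprog j1 = jprog j \<and> jargs j1 = ncons (nhd (jargs j) - 1) (ntl (jargs j))
         \<and> Q (\<lambda>j2. jprog j2 = nsnd (nsnd (jprog j))
               \<and> jargs j2 = ncons (jval j1) (ncons (nhd (jargs j) - 1) (ntl (jargs j)))
               \<and> jval j2 = jval j))"

definition infer_mn :: "((nat \<Rightarrow> bool) \<Rightarrow> bool) \<Rightarrow> nat \<Rightarrow> bool" where
  "infer_mn Q j \<longleftrightarrow> nfst (jprog j) = 5
     \<and> Q (\<lambda>j'. jprog j' = nsnd (jprog j) \<and> jargs j' = ncons (jval j) (jargs j) \<and> jval j' = 0)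
     \<and> (\<forall>m<jval j. Q (\<lambda>j'. jprog j' = nsnd (jprog j) \<and> jargs j' = ncons m (jargs j) \<and> jval j' \<noteq> 0))"

definition inferable :: "((nat \<Rightarrow> bool) \<Rightarrow> bool) \<Rightarrow> nat \<Rightarrow> bool" where
  "inferable Q j \<longleftrightarrow> infer_zero Q j \<or> infer_succ Q j \<or> infer_proj Q j \<or> infer_comp Q j
     \<or> infer_prec0 Q j \<or> infer_precS Q j \<or> infer_mn Q j"

lemmas infer_defs = infer_zero_def infer_succ_def infer_proj_def infer_comp_def infer_prec0_def
  infer_precS_def infer_mn_def

definition judgment_true :: "nat \<Rightarrow> bool" where
  "judgment_true j \<longleftrightarrow> eval (decode_recf (jprog j)) (list_decode (jargs j)) (jval j)"

definition premises_true :: "((nat \<Rightarrow> bool) \<Rightarrow> bool) \<Rightarrow> bool" where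
  "premises_true Q \<longleftrightarrow> (\<forall>P. Q P \<longrightarrow> (\<exists>j. P j \<and> judgment_true j))"

lemma premises_trueD: "premises_true Q \<Longrightarrow> Q P \<Longrightarrow> \<exists>j. P j \<and> judgment_true j"
  unfolding premises_true_def by blast

lemma infer_comp_sound:
  assumes rule: "infer_comp Q j" and prems: "premises_true Q"
  shows "judgment_true j"
proof -
  let ?a = "nsnd (jprog j)"
  let ?gs = "list_decode (nsnd ?a)" and ?ys = "list_decode (jaux j)"
  have len: "length ?ys = length ?gs" using rule by (simp add: infer_comp_def nlength_eq)
  have "eval (decode_recf (?gs ! m)) (list_decode (jargs j)) (?ys ! m)" if "m < length ?gs" for m
  proof -
    have "Q (\<lambda>j'. jprog j' = nnth (nsnd ?a) m \<and> jargs j' = jargs j \<and> jval j' = nnth (jaux j) m)"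
      using rule that by (simp add: infer_comp_def nlength_eq)
    then obtain j' where "jprog j' = nnth (nsnd ?a) m" "jargs j' = jargs j" "jval j' = nnth (jaux j) m"
      "judgment_true j'"
      using premises_trueD[OF prems] by blast
    then show ?thesis using that len by (simp add: judgment_true_def nnth_eq)
  qed
  then have "list_all2 (\<lambda>g y. eval g (list_decode (jargs j)) y) (map decode_recf ?gs) ?ys"
    using len by (simp add: list_all2_conv_all_nth)
  moreover obtain j' where "jprog j' = nfst ?a" "jargs j' = jaux j" "jval j' = jval j" "judgment_true j'"
    using rule premises_trueD[OF prems] unfolding infer_comp_def by blast
  ultimately show ?thesis
    using rule by (auto simp: judgment_true_def decode_recf_cases infer_comp_def intro: eval_Comp)
qed

lemma infer_precS_sound:
  assumes rule: "infer_precS Q j" and prems: "premises_true Q"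
  shows "judgment_true j"
proof -
  obtain n where n: "nhd (jargs j) = Suc n" using rule by (cases "nhd (jargs j)") (auto simp: infer_precS_def)
  let ?x = "ncons n (ntl (jargs j))"
  obtain j1 where j1: "jprog j1 = jprog j" "jargs j1 = ?x" "judgment_true j1"
    and "Q (\<lambda>j2. jprog j2 = nsnd (nsnd (jprog j)) \<and> jargs j2 = ncons (jval j1) ?x \<and> jval j2 = jval j)"
    using rule n premises_trueD[OF prems] unfolding infer_precS_def by auto
  then obtain j2 where j2: "jprog j2 = nsnd (nsnd (jprog j))" "jargs j2 = ncons (jval j1) ?x"
    "jval j2 = jval j" "judgment_true j2"
    using premises_trueD[OF prems] by blast
  have "list_decode (jargs j) = Suc n # list_decode (ntl (jargs j))"
    using rule n by (simp add: infer_precS_def list_decode_nonzero)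
  then show ?thesis
    using rule j1 j2
    by (auto simp: judgment_true_def decode_recf_cases infer_precS_def intro: eval_PrecS)
qed

lemma infer_mn_sound:
  assumes rule: "infer_mn Q j" and prems: "premises_true Q"
  shows "judgment_true j"
proof -
  let ?f = "decode_recf (nsnd (jprog j))" and ?xs = "list_decode (jargs j)"
  have "Q (\<lambda>j'. jprog j' = nsnd (jprog j) \<and> jargs j' = ncons (jval j) (jargs j) \<and> jval j' = 0)"
    using rule by (simp add: infer_mn_def)
  then obtain j0 where "jprog j0 = nsnd (jprog j)" "jargs j0 = ncons (jval j) (jargs j)" "jval j0 = 0"
    "judgment_true j0"
    using premises_trueD[OF prems] by blast
  then have "eval ?f (jval j # ?xs) 0" by (simp add: judgment_true_def)
  moreover have "\<exists>k. eval ?f (m # ?xs) (Suc k)" if "m < jval j" for m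
  proof -
    have "Q (\<lambda>j'. jprog j' = nsnd (jprog j) \<and> jargs j' = ncons m (jargs j) \<and> jval j' \<noteq> 0)"
      using rule that by (simp add: infer_mn_def)
    then obtain j' where "jprog j' = nsnd (jprog j)" "jargs j' = ncons m (jargs j)" "jval j' \<noteq> 0"
      "judgment_true j'"
      using premises_trueD[OF prems] by blast
    then show ?thesis by (cases "jval j'") (auto simp: judgment_true_def)
  qed
  ultimately show ?thesis using rule by (auto simp: judgment_true_def decode_recf_cases infer_mn_def intro: eval_Mn)
qed

lemma inferable_sound:
  assumes rule: "inferable Q j" and prems: "premises_true Q"
  shows "judgment_true j"
proof -
  have "judgment_true j" if "infer_zero Q j"
    using that by (simp add: infer_zero_def judgment_true_def decode_recf_cases eval_Zero)
  moreover have "judgment_true j" if "infer_succ Q j"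
    using that by (simp add: infer_succ_def judgment_true_def decode_recf_cases list_decode_nonzero eval_Succ)
  moreover have "judgment_true j" if "infer_proj Q j"
    using that eval_Proj
    by (simp add: infer_proj_def judgment_true_def decode_recf_cases nlength_eq nnth_eq)
  moreover have "judgment_true j" if "infer_prec0 Q j"
  proof -
    have "Q (\<lambda>j'. jprog j' = nfst (nsnd (jprog j)) \<and> jargs j' = ntl (jargs j) \<and> jval j' = jval j)"
      using that by (simp add: infer_prec0_def)
    then obtain j' where "jprog j' = nfst (nsnd (jprog j))" "jargs j' = ntl (jargs j)" "jval j' = jval j"
      "judgment_true j'"
      using premises_trueD[OF prems] by blast
    then show ?thesis
      using that eval_Prec0
      by (simp add: infer_prec0_def judgment_true_def decode_recf_cases list_decode_nonzero)
  qed
  ultimately show ?thesis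
    using rule infer_comp_sound[OF _ prems] infer_precS_sound[OF _ prems] infer_mn_sound[OF _ prems]
    unfolding inferable_def by blast
qed

definition prior :: "nat \<Rightarrow> nat \<Rightarrow> (nat \<Rightarrow> bool) \<Rightarrow> bool" where
  "prior d i P \<longleftrightarrow> (\<exists>k<i. P (nnth d k))"

definition valid_deriv :: "nat \<Rightarrow> bool" where
  "valid_deriv d \<longleftrightarrow> (\<forall>i<nlength d. inferable (prior d i) (nnth d i))"

lemma valid_deriv_sound: "valid_deriv d \<Longrightarrow> i < nlength d \<Longrightarrow> judgment_true (nnth d i)"
proof (induction i rule: less_induct)
  case (less i)
  have "premises_true (prior d i)"
    using less unfolding premises_true_def prior_def by (meson order.strict_trans)
  then show ?case using less.prems valid_deriv_def inferable_sound by blast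
qed

definition some_in :: "'a set \<Rightarrow> ('a \<Rightarrow> bool) \<Rightarrow> bool" where
  "some_in S P \<longleftrightarrow> (\<exists>x\<in>S. P x)"

definition valid_list :: "nat list \<Rightarrow> bool" where
  "valid_list D \<longleftrightarrow> (\<forall>i<length D. inferable (some_in (set (take i D))) (D ! i))"

lemma prior_list_encode:
  assumes "i \<le> length D" shows "prior (list_encode D) i = some_in (set (take i D))"
proof -
  have "(\<exists>k<i. P (nnth (list_encode D) k)) \<longleftrightarrow> (\<exists>k<i. P (D ! k))" for P
    using assms by (auto simp: nnth_list_encode)
  moreover have "(\<exists>k<i. P (D ! k)) \<longleftrightarrow> (\<exists>x\<in>set (take i D). P x)" for P
    using assms by (force simp: in_set_conv_nth)
  ultimately show ?thesis by (simp add: prior_def some_in_def fun_eq_iff)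
qed

lemma valid_deriv_list_encode: "valid_deriv (list_encode D) \<longleftrightarrow> valid_list D"
  by (simp add: valid_deriv_def valid_list_def prior_list_encode nlength_list_encode nnth_list_encode)

lemma inferable_mono:
  assumes j: "inferable (some_in S) j" and sub: "S \<subseteq> S'"
  shows "inferable (some_in S') j"
proof -
  have "infer_comp (some_in S') j" if "infer_comp (some_in S) j"
    using that sub unfolding infer_comp_def some_in_def by blast
  moreover have "infer_prec0 (some_in S') j" if "infer_prec0 (some_in S) j"
    using that sub unfolding infer_prec0_def some_in_def by blast
  moreover have "infer_precS (some_in S') j" if "infer_precS (some_in S) j"
    using that sub unfolding infer_precS_def some_in_def by blast
  moreover have "infer_mn (some_in S') j" if "infer_mn (some_in S) j"
    using that sub unfolding infer_mn_def some_in_def by blast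
  ultimately show ?thesis
    using j unfolding inferable_def by (auto simp: infer_zero_def infer_succ_def infer_proj_def)
qed

lemma valid_list_append: "valid_list A \<Longrightarrow> valid_list B \<Longrightarrow> valid_list (A @ B)"
  unfolding valid_list_def
proof (intro allI impI)
  fix i assume A: "\<forall>i<length A. inferable (some_in (set (take i A))) (A ! i)"
    and B: "\<forall>i<length B. inferable (some_in (set (take i B))) (B ! i)" and i: "i < length (A @ B)"
  show "inferable (some_in (set (take i (A @ B)))) ((A @ B) ! i)"
  proof (cases "i < length A")
    case True then show ?thesis using A by (simp add: nth_append)
  next
    case False
    then have "inferable (some_in (set (take (i - length A) B))) (B ! (i - length A))" using B i by simp
    then show ?thesis using False by (auto simp: nth_append elim!: inferable_mono)
  qed
qed

lemma valid_list_snoc: "valid_list D \<Longrightarrow> inferable (some_in (set D)) j \<Longrightarrow> valid_list (D @ [j])"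
  unfolding valid_list_def by (auto simp: nth_append less_Suc_eq)

definition proves :: "nat list \<Rightarrow> nat \<Rightarrow> nat \<Rightarrow> nat \<Rightarrow> bool" where
  "proves D c x y \<longleftrightarrow> (\<exists>j\<in>set D. jprog j = c \<and> jargs j = x \<and> jval j = y)"

lemma valid_list_collect:
  fixes n :: nat
  assumes "\<forall>m<n. \<exists>D. valid_list D \<and> P m (set D)"
    and mono: "\<And>m S S'. P m S \<Longrightarrow> S \<subseteq> S' \<Longrightarrow> P m S'"
  shows "\<exists>D. valid_list D \<and> (\<forall>m<n. P m (set D))"
  using assms(1)
proof (induction n)
  case 0
  show ?case by (rule exI[of _ "[]"]) (simp add: valid_list_def)
next
  case (Suc n)
  obtain D1 where D1: "valid_list D1" "\<forall>m<n. P m (set D1)" using Suc by auto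
  obtain D2 where D2: "valid_list D2" "P n (set D2)" using Suc.prems by blast
  have "\<forall>m<Suc n. P m (set (D1 @ D2))"
    using D1(2) D2(2) by (auto simp: less_Suc_eq elim: mono)
  then show ?case using D1(1) D2(1) valid_list_append by blast
qed

lemma valid_list_snoc_proves:
  "valid_list D \<Longrightarrow> inferable (some_in (set D)) (mk_judgment c x y h) \<Longrightarrow>
   \<exists>D'. valid_list D' \<and> proves D' c x y"
  by (intro exI[of _ "D @ [mk_judgment c x y h]"]) (auto simp: valid_list_snoc proves_def)

lemma derivable_Comp:
  assumes gs: "\<forall>m<length gs. \<exists>D. valid_list D \<and> proves D (encode_recf (gs ! m)) x (ys ! m)"
    and len: "length ys = length gs"
    and f: "valid_list D2" "proves D2 (encode_recf f) (list_encode ys) z"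
  shows "\<exists>D. valid_list D \<and> proves D (encode_recf (Comp f gs)) x z"
proof -
  obtain D1 where D1: "valid_list D1" "\<forall>m<length gs. proves D1 (encode_recf (gs ! m)) x (ys ! m)"
    using gs by (auto simp: proves_def intro: bexI dest!: valid_list_collect)
  have "inferable (some_in (set (D1 @ D2))) (mk_judgment (encode_recf (Comp f gs)) x z (list_encode ys))"
    unfolding inferable_def infer_comp_def using D1(2) f(2) len
    by (simp add: nlength_list_encode nnth_list_encode some_in_def proves_def) (metis Un_iff nth_map)
  then show ?thesis using D1(1) f(1) valid_list_append valid_list_snoc_proves by blast
qed

lemma derivable_Mn:
  assumes below: "\<forall>m<n. \<exists>D k. valid_list D \<and> proves D (encode_recf f) (list_encode (m # xs)) (Suc k)"
    and f: "valid_list D1" "proves D1 (encode_recf f) (list_encode (n # xs)) 0"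
  shows "\<exists>D. valid_list D \<and> proves D (encode_recf (Mn f)) (list_encode xs) n"
proof -
  obtain D2 where D2: "valid_list D2"
    "\<forall>m<n. \<exists>j\<in>set D2. jprog j = encode_recf f \<and> jargs j = list_encode (m # xs) \<and> jval j \<noteq> 0"
    using below by (fastforce simp: proves_def dest!: valid_list_collect)
  have "inferable (some_in (set (D1 @ D2))) (mk_judgment (encode_recf (Mn f)) (list_encode xs) n 0)"
    unfolding inferable_def infer_mn_def using f(2) D2(2) by (simp add: some_in_def proves_def) blast
  then show ?thesis using f(1) D2(1) valid_list_append valid_list_snoc_proves by blast
qed

lemma eval_imp_derivable:
  "eval f xs y \<Longrightarrow> \<exists>D. valid_list D \<and> proves D (encode_recf f) (list_encode xs) y"
proof (induction rule: eval.induct)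
  case (eval_Comp xs gs ys f z)
  then obtain D2 where "valid_list D2" "proves D2 (encode_recf f) (list_encode ys) z" by blast
  with eval_Comp.IH(1) show ?case
    by (intro derivable_Comp[where ys=ys]) (auto simp: list_all2_conv_all_nth)
next
  case (eval_Prec0 f xs y g)
  then obtain D where D: "valid_list D" "proves D (encode_recf f) (list_encode xs) y" by blast
  have "inferable (some_in (set D)) (mk_judgment (encode_recf (Prec f g)) (list_encode (0 # xs)) y 0)"
    unfolding inferable_def infer_prec0_def using D(2) by (simp add: some_in_def proves_def)
  then show ?case using D(1) valid_list_snoc_proves by blast
next
  case (eval_PrecS f g n xs y z)
  then obtain D1 D2 where D: "valid_list D1" "proves D1 (encode_recf (Prec f g)) (list_encode (n # xs)) y"
    "valid_list D2" "proves D2 (encode_recf g) (list_encode (y # n # xs)) z"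
    by blast
  have "inferable (some_in (set (D1 @ D2))) (mk_judgment (encode_recf (Prec f g)) (list_encode (Suc n # xs)) z 0)"
    unfolding inferable_def infer_precS_def using D(2,4) by (simp add: some_in_def proves_def) blast
  then show ?case using D(1,3) valid_list_append valid_list_snoc_proves by blast
next
  case (eval_Mn f n xs)
  then obtain D1 where "valid_list D1" "proves D1 (encode_recf f) (list_encode (n # xs)) 0" by blast
  with eval_Mn.IH(2) show ?case by (intro derivable_Mn) blast+
qed (rule valid_list_snoc_proves[where D="[]" and h=0],
    simp add: valid_list_def,
    simp add: inferable_def infer_defs nlength_list_encode nnth_list_encode)+

definition halt_cert :: "nat \<Rightarrow> nat \<Rightarrow> bool" where
  "halt_cert e s \<longleftrightarrow> valid_deriv s \<and> (\<exists>i<nlength s. jprog (nnth s i) = e \<and> jargs (nnth s i) = list_encode [e])"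

lemma ex_halt_cert_iff: "(\<exists>s. halt_cert (encode_recf f) s) \<longleftrightarrow> (\<exists>y. eval f [encode_recf f] y)"
proof
  assume "\<exists>s. halt_cert (encode_recf f) s"
  then obtain s i where "valid_deriv s" "i < nlength s" "jprog (nnth s i) = encode_recf f"
    "jargs (nnth s i) = list_encode [encode_recf f]"
    unfolding halt_cert_def by blast
  then show "\<exists>y. eval f [encode_recf f] y"
    using valid_deriv_sound[of s i] by (auto simp: judgment_true_def simp del: list_encode_Cons)
next
  assume "\<exists>y. eval f [encode_recf f] y"
  then obtain D y where D: "valid_list D" "proves D (encode_recf f) (list_encode [encode_recf f]) y"
    using eval_imp_derivable by blast
  then obtain i where "i < length D" "jprog (D ! i) = encode_recf f"
    "jargs (D ! i) = list_encode [encode_recf f]"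
    by (auto simp: proves_def in_set_conv_nth simp del: list_encode_Cons)
  then have "halt_cert (encode_recf f) (list_encode D)"
    using D(1) by (auto simp: halt_cert_def valid_deriv_list_encode nlength_list_encode nnth_list_encode
        simp del: list_encode_Cons)
  then show "\<exists>s. halt_cert (encode_recf f) s" by blast
qed

text \<open>Diagonalisation: if \<open>c\<close> decided the existence of certificates, the program
  \<open>Mn (Comp c [Proj 1])\<close> would halt on its own code exactly when it has no certificate.\<close>

lemma halting_undecidable: "\<not> computable_fun (\<lambda>e. of_bool (\<exists>s. halt_cert e s))"
proof
  assume "computable_fun (\<lambda>e. of_bool (\<exists>s. halt_cert e s))"
  then obtain c where c: "\<And>e. eval c [e] (of_bool (\<exists>s. halt_cert e s))"
    unfolding computable_fun_def by blast
  define diag where "diag = Mn (Comp c [Proj 1])"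
  have step: "eval (Comp c [Proj 1]) [n, e] v \<longleftrightarrow> eval c [e] v" for n e v
  proof
    assume "eval (Comp c [Proj 1]) [n, e] v"
    then show "eval c [e] v"
      by (cases rule: eval_CompE) (auto simp: list_all2_Cons1 elim!: eval_ProjE)
  next
    assume "eval c [e] v"
    then show "eval (Comp c [Proj 1]) [n, e] v"
      using eval_Proj[of 1 "[n, e]"] by (auto intro: eval_Comp1)
  qed
  have "(\<exists>y. eval diag [e] y) \<longleftrightarrow> \<not> (\<exists>s. halt_cert e s)" for e
  proof
    assume "\<exists>y. eval diag [e] y"
    then obtain y where "eval (Comp c [Proj 1]) [y, e] 0"
      unfolding diag_def by (auto elim: eval_MnE)
    then have "eval c [e] 0" using step by blast
    then show "\<not> (\<exists>s. halt_cert e s)" using eval_deterministic[OF c[of e]] by fastforce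
  next
    assume "\<not> (\<exists>s. halt_cert e s)"
    then have "eval (Comp c [Proj 1]) [0, e] 0" using c[of e] step by simp
    then show "\<exists>y. eval diag [e] y" unfolding diag_def by (auto intro: eval_Mn[where n=0])
  qed
  then show False using ex_halt_cert_iff[of diag] by blast
qed

lemma computable_judgment_sel[simp]:
  "computable_fun jprog" "computable_fun jargs" "computable_fun jval" "computable_fun jaux"
proof -
  have nsnd2: "computable_fun (\<lambda>j. nsnd (nsnd j))" by (simp add: computable_fun_compose)
  show "computable_fun jprog" "computable_fun jargs"
    unfolding jprog_def jargs_def by (simp_all add: computable_fun_compose)
  show "computable_fun jval" "computable_fun jaux"
    unfolding jval_def jaux_def
    using computable_fun_compose[OF computable_nfst nsnd2] computable_fun_compose[OF computable_nsnd nsnd2]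
    by simp_all
qed

definition EPrior :: "expr \<Rightarrow> expr \<Rightarrow> expr \<Rightarrow> expr \<Rightarrow> expr \<Rightarrow> expr" where
  "EPrior d i c x y = ECall (\<lambda>xs. of_bool (prior (xs ! 0) (xs ! 1)
      (\<lambda>j. jprog j = xs ! 2 \<and> jargs j = xs ! 3 \<and> jval j = xs ! 4))) [d, i, c, x, y]"

definition EPriorNZ :: "expr \<Rightarrow> expr \<Rightarrow> expr \<Rightarrow> expr \<Rightarrow> expr" where
  "EPriorNZ d i c x = ECall (\<lambda>xs. of_bool (prior (xs ! 0) (xs ! 1)
      (\<lambda>j. jprog j = xs ! 2 \<and> jargs j = xs ! 3 \<and> jval j \<noteq> 0))) [d, i, c, x]"

lemma wf_expr_EPrior[simp]:
  "wf_expr (EPrior d i c x y) \<longleftrightarrow> wf_expr d \<and> wf_expr i \<and> wf_expr c \<and> wf_expr x \<and> wf_expr y"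
proof -
  let ?J = "ECall2 nnth (EVar 1) (EVar 0)"
  have "computable_nary 5 (\<lambda>xs. of_bool (prior (xs ! 0) (xs ! 1)
      (\<lambda>j. jprog j = xs ! 2 \<and> jargs j = xs ! 3 \<and> jval j = xs ! 4)))"
    by (rule computable_nary_5I[where e="EEx (EVar 1) (EAnd (EEq (ECall1 jprog ?J) (EVar 3))
        (EAnd (EEq (ECall1 jargs ?J) (EVar 4)) (EEq (ECall1 jval ?J) (EVar 5))))"])
      (simp_all add: prior_def)
  then show ?thesis by (simp add: EPrior_def flip: numeral_2_eq_2)
qed

lemma wf_expr_EPriorNZ[simp]:
  "wf_expr (EPriorNZ d i c x) \<longleftrightarrow> wf_expr d \<and> wf_expr i \<and> wf_expr c \<and> wf_expr x"
proof -
  let ?J = "ECall2 nnth (EVar 1) (EVar 0)"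
  have "computable_nary 4 (\<lambda>xs. of_bool (prior (xs ! 0) (xs ! 1)
      (\<lambda>j. jprog j = xs ! 2 \<and> jargs j = xs ! 3 \<and> jval j \<noteq> 0)))"
    by (rule computable_nary_4I[where e="EEx (EVar 1) (EAnd (EEq (ECall1 jprog ?J) (EVar 3))
        (EAnd (EEq (ECall1 jargs ?J) (EVar 4)) (ENot (EEq (ECall1 jval ?J) (EConst 0)))))"])
      (simp_all add: prior_def)
  then show ?thesis by (simp add: EPriorNZ_def flip: numeral_2_eq_2)
qed

lemma eval_expr_EPrior[simp]:
  "eval_expr env (EPrior d i c x y) = of_bool (prior (eval_expr env d) (eval_expr env i)
     (\<lambda>j. jprog j = eval_expr env c \<and> jargs j = eval_expr env x \<and> jval j = eval_expr env y))"
  by (simp add: EPrior_def)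

lemma eval_expr_EPriorNZ[simp]:
  "eval_expr env (EPriorNZ d i c x) = of_bool (prior (eval_expr env d) (eval_expr env i)
     (\<lambda>j. jprog j = eval_expr env c \<and> jargs j = eval_expr env x \<and> jval j \<noteq> 0))"
  by (simp add: EPriorNZ_def)

text \<open>In the following expressions \<open>EVar 0\<close> and \<open>EVar 1\<close> are the derivation \<open>d\<close> and the
  position \<open>i\<close> of the judgment \<open>nnth d i\<close> to be checked.\<close>

lemma computable_infer_simple:
  "computable_fun2 (\<lambda>d i. of_bool (infer_zero (prior d i) (nnth d i)))"
  "computable_fun2 (\<lambda>d i. of_bool (infer_succ (prior d i) (nnth d i)))"
  "computable_fun2 (\<lambda>d i. of_bool (infer_proj (prior d i) (nnth d i)))"
proof -
  let ?J = "ECall2 nnth (EVar 0) (EVar 1)"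
  let ?c = "ECall1 jprog ?J" and ?x = "ECall1 jargs ?J" and ?y = "ECall1 jval ?J"
  show "computable_fun2 (\<lambda>d i. of_bool (infer_zero (prior d i) (nnth d i)))"
    by (rule computable_fun2I[where e="EAnd (EEq (ECall1 nfst ?c) (EConst 0)) (EEq ?y (EConst 0))"])
      (simp_all add: infer_zero_def)
  show "computable_fun2 (\<lambda>d i. of_bool (infer_succ (prior d i) (nnth d i)))"
    by (rule computable_fun2I[where e="EAnd (EEq (ECall1 nfst ?c) (EConst 1))
        (EAnd (ENot (EEq ?x (EConst 0))) (EEq ?y (EAdd (ECall1 nhd ?x) (EConst 1))))"])
      (simp_all add: infer_succ_def)
  show "computable_fun2 (\<lambda>d i. of_bool (infer_proj (prior d i) (nnth d i)))"
    by (rule computable_fun2I[where e="EAnd (EEq (ECall1 nfst ?c) (EConst 2))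
        (EAnd (ELess (ECall1 nsnd ?c) (ECall1 nlength ?x)) (EEq ?y (ECall2 nnth ?x (ECall1 nsnd ?c))))"])
      (simp_all add: infer_proj_def)
qed

lemma computable_infer_comp: "computable_fun2 (\<lambda>d i. of_bool (infer_comp (prior d i) (nnth d i)))"
proof -
  let ?J = "\<lambda>k. ECall2 nnth (EVar k) (EVar (Suc k))"
  let ?c = "\<lambda>k. ECall1 jprog (?J k)"
  let ?gs = "\<lambda>k. ECall1 nsnd (ECall1 nsnd (?c k))" and ?h = "\<lambda>k. ECall1 jaux (?J k)"
  let ?premise = "EPrior (EVar 1) (EVar 2) (ECall2 nnth (?gs 1) (EVar 0)) (ECall1 jargs (?J 1))
    (ECall2 nnth (?h 1) (EVar 0))"
  show ?thesis
    by (rule computable_fun2I[where e="EAnd (EEq (ECall1 nfst (?c 0)) (EConst 3))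
        (EAnd (EEq (ECall1 nlength (?h 0)) (ECall1 nlength (?gs 0)))
          (EAnd (EAll (ECall1 nlength (?gs 0)) ?premise)
            (EPrior (EVar 0) (EVar 1) (ECall1 nfst (ECall1 nsnd (?c 0))) (?h 0)
              (ECall1 jval (?J 0)))))"])
      (simp_all add: infer_comp_def)
qed

lemma computable_infer_prec:
  "computable_fun2 (\<lambda>d i. of_bool (infer_prec0 (prior d i) (nnth d i)))"
  "computable_fun2 (\<lambda>d i. of_bool (infer_precS (prior d i) (nnth d i)))"
proof -
  let ?J = "\<lambda>k. ECall2 nnth (EVar k) (EVar (Suc k))"
  let ?c = "\<lambda>k. ECall1 jprog (?J k)" and ?x = "\<lambda>k. ECall1 jargs (?J k)"
  let ?y = "\<lambda>k. ECall1 jval (?J k)"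
  let ?x' = "\<lambda>k. ECall2 ncons (EDiff (ECall1 nhd (?x k)) (EConst 1)) (ECall1 ntl (?x k))"
  let ?J1 = "ECall2 nnth (EVar 1) (EVar 0)"
  show "computable_fun2 (\<lambda>d i. of_bool (infer_prec0 (prior d i) (nnth d i)))"
    by (rule computable_fun2I[where e="EAnd (EEq (ECall1 nfst (?c 0)) (EConst 4))
        (EAnd (ENot (EEq (?x 0) (EConst 0))) (EAnd (EEq (ECall1 nhd (?x 0)) (EConst 0))
          (EPrior (EVar 0) (EVar 1) (ECall1 nfst (ECall1 nsnd (?c 0))) (ECall1 ntl (?x 0)) (?y 0))))"])
      (simp_all add: infer_prec0_def)
  show "computable_fun2 (\<lambda>d i. of_bool (infer_precS (prior d i) (nnth d i)))"
    by (rule computable_fun2I[where e="EAnd (EEq (ECall1 nfst (?c 0)) (EConst 4))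
        (EAnd (ENot (EEq (?x 0) (EConst 0))) (EAnd (ENot (EEq (ECall1 nhd (?x 0)) (EConst 0)))
          (EEx (EVar 1) (EAnd (EEq (ECall1 jprog ?J1) (?c 1)) (EAnd (EEq (ECall1 jargs ?J1) (?x' 1))
            (EPrior (EVar 1) (EVar 2) (ECall1 nsnd (ECall1 nsnd (?c 1)))
              (ECall2 ncons (ECall1 jval ?J1) (?x' 1)) (?y 1)))))))"])
      (simp_all add: infer_precS_def prior_def, blast)
qed

lemma computable_infer_mn: "computable_fun2 (\<lambda>d i. of_bool (infer_mn (prior d i) (nnth d i)))"
proof -
  let ?J = "\<lambda>k. ECall2 nnth (EVar k) (EVar (Suc k))"
  let ?c = "\<lambda>k. ECall1 jprog (?J k)" and ?x = "\<lambda>k. ECall1 jargs (?J k)"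
  let ?y = "\<lambda>k. ECall1 jval (?J k)"
  show ?thesis
    by (rule computable_fun2I[where e="EAnd (EEq (ECall1 nfst (?c 0)) (EConst 5))
        (EAnd (EPrior (EVar 0) (EVar 1) (ECall1 nsnd (?c 0)) (ECall2 ncons (?y 0) (?x 0)) (EConst 0))
          (EAll (?y 0) (EPriorNZ (EVar 1) (EVar 2) (ECall1 nsnd (?c 1)) (ECall2 ncons (EVar 0) (?x 1)))))"])
      (simp_all add: infer_mn_def)
qed

lemma computable_inferable: "computable_fun2 (\<lambda>d i. of_bool (inferable (prior d i) (nnth d i)))"
  unfolding inferable_def
  by (intro computable_fun2_disj computable_infer_simple computable_infer_comp computable_infer_prec
      computable_infer_mn)

lemma computable_halt_cert: "computable_fun2 (\<lambda>e s. of_bool (halt_cert e s))"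
proof -
  let ?J = "ECall2 nnth (EVar 2) (EVar 0)"
  let ?valid = "EAll (ECall1 nlength (EVar 1))
    (ECall2 (\<lambda>d i. of_bool (inferable (prior d i) (nnth d i))) (EVar 2) (EVar 0))"
  show ?thesis
    using computable_inferable
    by (intro computable_fun2I[where e="EAnd ?valid (EEx (ECall1 nlength (EVar 1))
        (EAnd (EEq (ECall1 jprog ?J) (EVar 1)) (EEq (ECall1 jargs ?J) (ECall2 ncons (EVar 1) (EConst 0)))))"])
      (simp_all add: halt_cert_def valid_deriv_def)
qed

section \<open>Equivalence relations with classes of size at most two\<close>

definition pair_equiv :: "('a \<times> 'a) set \<Rightarrow> bool" where
  "pair_equiv R \<longleftrightarrow>
     equiv UNIV R \<and> (\<forall>x y z. (x, y) \<in> R \<longrightarrow> (x, z) \<in> R \<longrightarrow> x = y \<or> x = z \<or> y = z)"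

definition singleton_class :: "('a \<times> 'a) set \<Rightarrow> 'a \<Rightarrow> bool" where
  "singleton_class R x \<longleftrightarrow> (\<forall>y. (x, y) \<in> R \<longrightarrow> y = x)"

definition pair_min :: "('a::linorder \<times> 'a) set \<Rightarrow> 'a \<Rightarrow> bool" where
  "pair_min R x \<longleftrightarrow> (\<exists>y. x < y \<and> (x, y) \<in> R)"

definition partner :: "('a \<times> 'a) set \<Rightarrow> 'a \<Rightarrow> 'a" where
  "partner R x = (THE y. y \<noteq> x \<and> (x, y) \<in> R)"

lemma pair_equivI:
  assumes refl: "\<And>x. (x, x) \<in> R" and sym: "\<And>x y. (x, y) \<in> R \<Longrightarrow> (y, x) \<in> R"
    and small: "\<And>x y z. (x, y) \<in> R \<Longrightarrow> (x, z) \<in> R \<Longrightarrow> x = y \<or> x = z \<or> y = z"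
  shows "pair_equiv R"
proof -
  have "(x, z) \<in> R" if xy: "(x, y) \<in> R" and yz: "(y, z) \<in> R" for x y z
  proof -
    have "y = x \<or> y = z \<or> x = z" using small[OF sym[OF xy] yz] .
    then show ?thesis using xy yz refl by auto
  qed
  then have "trans R" by (rule transI)
  moreover have "refl R" using refl by (simp add: refl_on_def)
  moreover have "sym R" using sym by (rule symI)
  moreover have "\<forall>x y z. (x, y) \<in> R \<longrightarrow> (x, z) \<in> R \<longrightarrow> x = y \<or> x = z \<or> y = z"
    using small by blast
  ultimately show ?thesis unfolding pair_equiv_def equiv_def by simp
qed

context
  fixes R :: "('a \<times> 'a) set"
  assumes R: "pair_equiv R"
begin

lemma pair_equiv_refl: "(x, x) \<in> R"
  using R unfolding pair_equiv_def equiv_def refl_on_def by blast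

lemma pair_equiv_sym: "(x, y) \<in> R \<Longrightarrow> (y, x) \<in> R"
  using R unfolding pair_equiv_def equiv_def sym_def by blast

lemma pair_equiv_small: "(x, y) \<in> R \<Longrightarrow> (x, z) \<in> R \<Longrightarrow> x = y \<or> x = z \<or> y = z"
  using R unfolding pair_equiv_def by blast

lemma partner_eq:
  assumes "y \<noteq> x" "(x, y) \<in> R" shows "partner R x = y"
  unfolding partner_def
proof (rule the_equality)
  show "y \<noteq> x \<and> (x, y) \<in> R" using assms by simp
  fix z assume "z \<noteq> x \<and> (x, z) \<in> R"
  then show "z = y" using pair_equiv_small[of x y z] assms by auto
qed

lemma partner_in_class:
  assumes "\<not> singleton_class R x"
  shows "partner R x \<noteq> x" "(x, partner R x) \<in> R"
proof -
  obtain y where "y \<noteq> x" "(x, y) \<in> R" using assms unfolding singleton_class_def by blast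
  then show "partner R x \<noteq> x" "(x, partner R x) \<in> R" using partner_eq by simp_all
qed

lemma pair_equiv_iff: "(x, y) \<in> R \<longleftrightarrow> x = y \<or> (\<not> singleton_class R x \<and> y = partner R x)"
proof
  assume xy: "(x, y) \<in> R"
  show "x = y \<or> (\<not> singleton_class R x \<and> y = partner R x)"
  proof (cases "x = y")
    case False
    then have "\<not> singleton_class R x" using xy unfolding singleton_class_def by blast
    then show ?thesis using partner_eq[OF _ xy] False by auto
  qed simp
next
  show "x = y \<or> (\<not> singleton_class R x \<and> y = partner R x) \<Longrightarrow> (x, y) \<in> R"
    using pair_equiv_refl partner_in_class(2) by blast
qed

lemma partner_not_singleton:
  assumes "\<not> singleton_class R x" shows "\<not> singleton_class R (partner R x)"
proof -
  have "(partner R x, x) \<in> R" using partner_in_class(2)[OF assms] by (rule pair_equiv_sym)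
  then show ?thesis using partner_in_class(1)[OF assms] unfolding singleton_class_def by fastforce
qed

lemma partner_partner:
  assumes "\<not> singleton_class R x" shows "partner R (partner R x) = x"
  using partner_in_class[OF assms] pair_equiv_sym by (intro partner_eq) auto

end

context
  fixes R :: "('a::linorder \<times> 'a) set"
  assumes R: "pair_equiv R"
begin

lemma pair_min_iff: "pair_min R x \<longleftrightarrow> \<not> singleton_class R x \<and> x < partner R x"
proof
  assume "pair_min R x"
  then obtain y where "x < y" "(x, y) \<in> R" unfolding pair_min_def by blast
  then show "\<not> singleton_class R x \<and> x < partner R x" using pair_equiv_iff[OF R, of x y] by auto
next
  assume "\<not> singleton_class R x \<and> x < partner R x"
  then show "pair_min R x" unfolding pair_min_def using partner_in_class(2)[OF R] by blast
qed

lemma pair_min_not_singleton: "pair_min R x \<Longrightarrow> \<not> singleton_class R x"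
  using pair_min_iff by blast

lemma pair_min_partner: "pair_min R x \<Longrightarrow> \<not> pair_min R (partner R x)"
  using pair_min_iff partner_partner[OF R] by fastforce

lemma not_pair_min_partner:
  assumes "\<not> singleton_class R x" "\<not> pair_min R x"
  shows "pair_min R (partner R x)"
proof -
  have "partner R x < x"
    using assms pair_min_iff partner_in_class(1)[OF R] by (meson linorder_neqE)
  then show ?thesis
    using assms(1) pair_min_iff partner_partner[OF R] partner_not_singleton[OF R] by simp
qed

end

definition class_transfer ::
    "('a::linorder \<times> 'a) set \<Rightarrow> ('b \<times> 'b) set \<Rightarrow> ('a \<Rightarrow> 'b) \<Rightarrow> ('a \<Rightarrow> 'b) \<Rightarrow> 'a \<Rightarrow> 'b" where
  "class_transfer E F bS bP x =
     (if singleton_class E x then bS x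
      else if pair_min E x then bP x
      else partner F (bP (partner E x)))"

context
  fixes E :: "('a::linorder \<times> 'a) set" and F :: "('b::linorder \<times> 'b) set" and bS bP :: "'a \<Rightarrow> 'b"
  assumes E: "pair_equiv E" and F: "pair_equiv F"
    and bS: "\<And>x. singleton_class E x \<Longrightarrow> singleton_class F (bS x)"
    and bP: "\<And>x. pair_min E x \<Longrightarrow> pair_min F (bP x)"
begin

lemma class_transfer_partner:
  "\<not> singleton_class E x \<Longrightarrow> class_transfer E F bS bP (partner E x) = partner F (class_transfer E F bS bP x)"
proof (cases "pair_min E x")
  case True
  then show ?thesis
    using pair_min_partner[OF E] partner_not_singleton[OF E] partner_partner[OF E]
    by (simp add: class_transfer_def pair_min_not_singleton[OF E])
next
  case False
  assume x: "\<not> singleton_class E x"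
  then have "pair_min E (partner E x)" using not_pair_min_partner[OF E] False by blast
  then show ?thesis
    using x False bP partner_partner[OF F] pair_min_not_singleton[OF F] pair_min_not_singleton[OF E]
    by (simp add: class_transfer_def)
qed

lemma class_transfer_rel: "(x, y) \<in> E \<Longrightarrow> (class_transfer E F bS bP x, class_transfer E F bS bP y) \<in> F"
proof (cases "x = y")
  case False
  assume "(x, y) \<in> E"
  then have x: "\<not> singleton_class E x" and y: "y = partner E x"
    using False pair_equiv_iff[OF E] by blast+
  have "\<not> singleton_class F (class_transfer E F bS bP x)"
    using x bP pair_min_not_singleton[OF F] partner_not_singleton[OF F] not_pair_min_partner[OF E]
    by (auto simp: class_transfer_def)
  then show ?thesis using y x class_transfer_partner pair_equiv_iff[OF F] by simp
qed (simp add: pair_equiv_refl[OF F])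

lemma class_transfer_inverse:
  assumes bS': "\<And>x. singleton_class E x \<Longrightarrow> bS' (bS x) = x"
    and bP': "\<And>x. pair_min E x \<Longrightarrow> bP' (bP x) = x"
  shows "class_transfer F E bS' bP' (class_transfer E F bS bP x) = x"
proof -
  consider "singleton_class E x" | "pair_min E x" | "\<not> singleton_class E x" "\<not> pair_min E x"
    by blast
  then show ?thesis
  proof cases
    case 3
    let ?m = "partner E x"
    have m: "pair_min E ?m" using 3 not_pair_min_partner[OF E] by blast
    then have "class_transfer E F bS bP x = partner F (bP ?m)"
      using 3 by (simp add: class_transfer_def)
    moreover have "\<not> singleton_class F (partner F (bP ?m))" "\<not> pair_min F (partner F (bP ?m))"
      using bP[OF m] pair_min_not_singleton[OF F] partner_not_singleton[OF F] pair_min_partner[OF F]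
      by blast+
    ultimately show ?thesis
      using m 3 bP'[OF m] bP partner_partner[OF F] partner_partner[OF E] pair_min_not_singleton[OF F]
      by (simp add: class_transfer_def)
  qed (use bS bS' bP bP' pair_min_not_singleton[OF F] pair_min_not_singleton[OF E] in
      \<open>simp_all add: class_transfer_def\<close>)
qed

end

lemma enumerate_inverse:
  fixes S :: "nat set"
  assumes "infinite S" "x \<in> S"
  shows "enumerate S (inv_into UNIV (enumerate S) x) = x"
  using assms bij_enumerate[of S] by (simp add: bij_betw_def f_inv_into_f)

lemma pair_equiv_isomorphic:
  fixes E F :: "(nat \<times> nat) set"
  assumes E: "pair_equiv E" and F: "pair_equiv F"
    and "infinite {x. singleton_class E x}" "infinite {x. pair_min E x}"
    and "infinite {x. singleton_class F x}" "infinite {x. pair_min F x}"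
  shows "isomorphic UNIV E UNIV F"
proof -
  let ?SE = "{x. singleton_class E x}" and ?PE = "{x. pair_min E x}"
  let ?SF = "{x. singleton_class F x}" and ?PF = "{x. pair_min F x}"
  define f where "f = class_transfer E F (enumerate ?SF \<circ> inv_into UNIV (enumerate ?SE))
    (enumerate ?PF \<circ> inv_into UNIV (enumerate ?PE))"
  define g where "g = class_transfer F E (enumerate ?SE \<circ> inv_into UNIV (enumerate ?SF))
    (enumerate ?PE \<circ> inv_into UNIV (enumerate ?PF))"
  have enum_in: "enumerate T (inv_into UNIV (enumerate S) x) \<in> T" if "infinite T" for S T :: "nat set" and x
    using that enumerate_in_set by blast
  have inv_enum: "inv_into UNIV (enumerate S) (enumerate S n) = n" if "infinite S" for S :: "nat set" and n
    using that strict_mono_enumerate[OF that] by (simp add: strict_mono_imp_inj_on)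
  have gf: "g (f x) = x" for x
    unfolding f_def g_def using assms enum_in inv_enum enumerate_inverse
    by (intro class_transfer_inverse) auto
  have fg: "f (g y) = y" for y
    unfolding f_def g_def using assms enum_in inv_enum enumerate_inverse
    by (intro class_transfer_inverse) auto
  have "(x, y) \<in> E \<longleftrightarrow> (f x, f y) \<in> F" for x y
  proof
    show "(x, y) \<in> E \<Longrightarrow> (f x, f y) \<in> F"
      unfolding f_def using assms enum_in by (intro class_transfer_rel) auto
    assume "(f x, f y) \<in> F"
    then have "(g (f x), g (f y)) \<in> E"
      unfolding g_def using assms enum_in by (intro class_transfer_rel) auto
    then show "(x, y) \<in> E" by (simp add: gf)
  qed
  moreover have "inj f" by (metis gf injI)
  moreover have "f ` UNIV = UNIV" by (metis fg surj_def)
  ultimately show ?thesis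
    unfolding isomorphic_def isomorphism_def embedding_def by (auto intro: inj_on_subset)
qed

section \<open>Two isomorphic computable structures\<close>

text \<open>Elements are coded as pairs \<open>npair t k\<close> with tag \<open>t\<close>. In both structures the elements
  with tags \<open>1\<close> and \<open>2\<close> and the same \<open>k\<close> form a class, and all other elements are singletons,
  except that \<open>halting_pairs_rel\<close> joins \<open>npair 3 e\<close> with \<open>npair 4 (npair e s)\<close> when \<open>s\<close>
  is the least halting certificate of \<open>e\<close>.\<close>

definition paired :: "nat \<Rightarrow> nat \<Rightarrow> bool" where
  "paired x y \<longleftrightarrow> (nfst x = 1 \<or> nfst x = 2) \<and> (nfst y = 1 \<or> nfst y = 2) \<and> nsnd x = nsnd y"

definition pairs_rel :: "(nat \<times> nat) set" where
  "pairs_rel = {(x, y). x = y \<or> paired x y}"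

definition first_halt_cert :: "nat \<Rightarrow> nat \<Rightarrow> bool" where
  "first_halt_cert e s \<longleftrightarrow> halt_cert e s \<and> (\<forall>s'<s. \<not> halt_cert e s')"

definition halt_link :: "nat \<Rightarrow> nat \<Rightarrow> bool" where
  "halt_link x y \<longleftrightarrow> nfst x = 3 \<and> nfst y = 4 \<and> nfst (nsnd y) = nsnd x
     \<and> first_halt_cert (nsnd x) (nsnd (nsnd y))"

definition halting_pairs_rel :: "(nat \<times> nat) set" where
  "halting_pairs_rel = {(x, y). x = y \<or> paired x y \<or> halt_link x y \<or> halt_link y x}"

lemma paired_sym: "paired x y \<Longrightarrow> paired y x"
  unfolding paired_def by auto

lemma paired_small: "paired x y \<Longrightarrow> paired x z \<Longrightarrow> x = y \<or> x = z \<or> y = z"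
  unfolding paired_def by (metis nat_eq_iff_nfst_nsnd)

lemma first_halt_cert_unique: "first_halt_cert e s \<Longrightarrow> first_halt_cert e s' \<Longrightarrow> s = s'"
  unfolding first_halt_cert_def by (metis linorder_neqE_nat)

lemma halt_link_unique_right: "halt_link x y \<Longrightarrow> halt_link x z \<Longrightarrow> y = z"
  unfolding halt_link_def by (metis first_halt_cert_unique nat_eq_iff_nfst_nsnd)

lemma halt_link_unique_left: "halt_link x z \<Longrightarrow> halt_link y z \<Longrightarrow> x = y"
  unfolding halt_link_def by (metis nat_eq_iff_nfst_nsnd)

lemma ex_first_halt_cert: "(\<exists>s. halt_cert e s) \<longleftrightarrow> (\<exists>s. first_halt_cert e s)"
  unfolding first_halt_cert_def by (metis exists_least_iff)

lemma pair_equiv_pairs_rel: "pair_equiv pairs_rel"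
  by (rule pair_equivI) (auto simp: pairs_rel_def dest: paired_sym paired_small)

lemma paired_not_halt_link: "paired x y \<Longrightarrow> \<not> halt_link x z \<and> \<not> halt_link z x"
  unfolding paired_def halt_link_def by auto

lemma halt_link_not_halt_link: "halt_link x y \<Longrightarrow> \<not> halt_link z x"
  unfolding halt_link_def by auto

lemma pair_equiv_halting_pairs_rel: "pair_equiv halting_pairs_rel"
proof (rule pair_equivI)
  fix x y z
  assume "(x, y) \<in> halting_pairs_rel" and "(x, z) \<in> halting_pairs_rel"
  then have "x = y \<or> paired x y \<or> halt_link x y \<or> halt_link y x"
    "x = z \<or> paired x z \<or> halt_link x z \<or> halt_link z x"
    by (simp_all add: halting_pairs_rel_def)
  then show "x = y \<or> x = z \<or> y = z"
    using paired_small halt_link_unique_right halt_link_unique_left paired_not_halt_link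
      halt_link_not_halt_link by blast
next
  show "(x, x) \<in> halting_pairs_rel" for x by (simp add: halting_pairs_rel_def)
  show "(y, x) \<in> halting_pairs_rel" if "(x, y) \<in> halting_pairs_rel" for x y
    using that paired_sym by (auto simp: halting_pairs_rel_def)
qed

lemma singleton_class_tag0:
  "singleton_class pairs_rel (npair 0 k)" "singleton_class halting_pairs_rel (npair 0 k)"
  by (auto simp: singleton_class_def pairs_rel_def halting_pairs_rel_def paired_def halt_link_def)

lemma pair_min_tag1: "pair_min pairs_rel (npair 1 k)" "pair_min halting_pairs_rel (npair 1 k)"
proof -
  have "npair 1 k < npair 2 k" by (simp add: npair_def prod_encode_def)
  then show "pair_min pairs_rel (npair 1 k)" "pair_min halting_pairs_rel (npair 1 k)"
    unfolding pair_min_def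
    by (auto simp: pairs_rel_def halting_pairs_rel_def paired_def intro!: exI[of _ "npair 2 k"])
qed

lemma infinite_tagged:
  assumes "\<And>k. P (npair t k)" shows "infinite {x. P x}"
proof -
  have "inj (npair t)" by (auto intro: injI)
  then have "infinite (range (npair t))" by (rule range_inj_infinite)
  moreover have "range (npair t) \<subseteq> {x. P x}" using assms by auto
  ultimately show ?thesis using infinite_super by blast
qed

lemma isomorphic_pairs_halting_pairs: "isomorphic UNIV pairs_rel UNIV halting_pairs_rel"
  using pair_equiv_pairs_rel pair_equiv_halting_pairs_rel singleton_class_tag0 pair_min_tag1
  by (intro pair_equiv_isomorphic infinite_tagged) auto

lemma computable_paired: "computable_fun2 (\<lambda>x y. of_bool (paired x y))"
proof -
  let ?tag12 = "\<lambda>a. EOr (EEq (ECall1 nfst a) (EConst 1)) (EEq (ECall1 nfst a) (EConst 2))"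
  show ?thesis
    by (rule computable_fun2I[where e="EAnd (?tag12 (EVar 0)) (EAnd (?tag12 (EVar 1))
        (EEq (ECall1 nsnd (EVar 0)) (ECall1 nsnd (EVar 1))))"])
      (simp_all add: paired_def)
qed

lemma computable_first_halt_cert: "computable_fun2 (\<lambda>e s. of_bool (first_halt_cert e s))"
proof -
  let ?hc = "\<lambda>a b. ECall2 (\<lambda>e s. of_bool (halt_cert e s)) a b"
  show ?thesis
    using computable_halt_cert
    by (intro computable_fun2I[where e="EAnd (?hc (EVar 0) (EVar 1))
        (EAll (EVar 1) (ENot (?hc (EVar 1) (EVar 0))))"])
      (simp_all add: first_halt_cert_def)
qed

lemma computable_halt_link:
  "computable_fun2 (\<lambda>x y. of_bool (halt_link x y))" "computable_fun2 (\<lambda>x y. of_bool (halt_link y x))"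
proof -
  let ?e = "\<lambda>x y. EAnd (EEq (ECall1 nfst x) (EConst 3)) (EAnd (EEq (ECall1 nfst y) (EConst 4))
    (EAnd (EEq (ECall1 nfst (ECall1 nsnd y)) (ECall1 nsnd x))
      (ECall2 (\<lambda>e s. of_bool (first_halt_cert e s)) (ECall1 nsnd x) (ECall1 nsnd (ECall1 nsnd y)))))"
  show "computable_fun2 (\<lambda>x y. of_bool (halt_link x y))"
    using computable_first_halt_cert
    by (intro computable_fun2I[where e="?e (EVar 0) (EVar 1)"]) (simp_all add: halt_link_def)
  show "computable_fun2 (\<lambda>x y. of_bool (halt_link y x))"
    using computable_first_halt_cert
    by (intro computable_fun2I[where e="?e (EVar 1) (EVar 0)"]) (simp_all add: halt_link_def)
qed

lemma computable_eq_struct_pairs_rel: "computable_eq_struct UNIV pairs_rel"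
proof -
  have "computable_rel pairs_rel"
    using computable_fun2_disj[OF computable_fun2_eq computable_paired]
    by (intro computable_rel_of_fun2) (simp add: pairs_rel_def)
  then show ?thesis
    using pair_equiv_pairs_rel computable_set_UNIV
    by (simp add: computable_eq_struct_def eq_struct_def pair_equiv_def)
qed

lemma computable_eq_struct_halting_pairs_rel: "computable_eq_struct UNIV halting_pairs_rel"
proof -
  have "computable_rel halting_pairs_rel"
    using computable_fun2_disj[OF computable_fun2_eq computable_fun2_disj[OF computable_paired
          computable_fun2_disj[OF computable_halt_link]]]
    by (intro computable_rel_of_fun2) (simp add: halting_pairs_rel_def)
  then show ?thesis
    using pair_equiv_halting_pairs_rel computable_set_UNIV
    by (simp add: computable_eq_struct_def eq_struct_def pair_equiv_def)
qed

lemma isomorphism_decides_halting: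
  assumes h: "isomorphism h UNIV halting_pairs_rel UNIV pairs_rel"
  shows "(\<exists>s. halt_cert e s) \<longleftrightarrow> nfst (h (npair 3 e)) = 1 \<or> nfst (h (npair 3 e)) = 2"
proof -
  have inj: "inj h" and sur: "surj h" and rel: "\<And>x y. (x, y) \<in> halting_pairs_rel \<longleftrightarrow> (h x, h y) \<in> pairs_rel"
    using h unfolding isomorphism_def embedding_def by auto
  let ?a = "h (npair 3 e)"
  show ?thesis
  proof
    assume "\<exists>s. halt_cert e s"
    then obtain s where "first_halt_cert e s" using ex_first_halt_cert by blast
    then have "(npair 3 e, npair 4 (npair e s)) \<in> halting_pairs_rel"
      by (simp add: halting_pairs_rel_def halt_link_def)
    then have "(?a, h (npair 4 (npair e s))) \<in> pairs_rel" using rel by blast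
    moreover have "?a \<noteq> h (npair 4 (npair e s))" using inj by (simp add: inj_eq)
    ultimately show "nfst ?a = 1 \<or> nfst ?a = 2" by (auto simp: pairs_rel_def paired_def)
  next
    assume tag: "nfst ?a = 1 \<or> nfst ?a = 2"
    define z where "z = npair (3 - nfst ?a) (nsnd ?a)"
    obtain y where y: "h y = z" using sur by (metis surjD)
    have "(?a, z) \<in> pairs_rel" using tag by (auto simp: z_def pairs_rel_def paired_def)
    then have "(npair 3 e, y) \<in> halting_pairs_rel" using rel y by simp
    moreover have "nfst z \<noteq> nfst ?a" using tag by (auto simp: z_def)
    then have "y \<noteq> npair 3 e" using y by auto
    ultimately have "halt_link (npair 3 e) y"
      by (auto simp: halting_pairs_rel_def paired_def halt_link_def)
    then show "\<exists>s. halt_cert e s" by (auto simp: halt_link_def first_halt_cert_def)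
  qed
qed

lemma no_computable_isomorphism:
  assumes "computable_fun h" shows "\<not> isomorphism h UNIV halting_pairs_rel UNIV pairs_rel"
proof
  let ?tagged = "\<lambda>e. of_bool (nfst (h (npair 3 e)) = 1 \<or> nfst (h (npair 3 e)) = 2)"
  assume "isomorphism h UNIV halting_pairs_rel UNIV pairs_rel"
  then have eq: "(\<lambda>e. of_bool (\<exists>s. halt_cert e s)) = ?tagged"
    using isomorphism_decides_halting by (simp add: fun_eq_iff)
  have "computable_fun ?tagged"
    using assms
    by (intro computable_funI[where e="EOr (EEq (ECall1 nfst (ECall1 h (ECall2 npair (EConst 3) (EVar 0))))
        (EConst 1)) (EEq (ECall1 nfst (ECall1 h (ECall2 npair (EConst 3) (EVar 0)))) (EConst 2))"])
      simp_all
  then have "computable_fun (\<lambda>e. of_bool (\<exists>s. halt_cert e s))" unfolding eq .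
  with halting_undecidable show False by contradiction
qed

lemma not_comp_categorical_pairs_rel: "\<not> comp_categorical UNIV pairs_rel"
  unfolding comp_categorical_def
  using computable_eq_struct_halting_pairs_rel isomorphic_pairs_halting_pairs no_computable_isomorphism
  by blast

section \<open>Computable bi-embeddability\<close>

context
  fixes G :: "nat set" and R :: "(nat \<times> nat) set" and \<phi> \<psi> :: "nat \<Rightarrow> nat"
  assumes equiv: "equiv G R" and computable: "computable_rel R"
    and \<phi>: "embedding \<phi> UNIV pairs_rel G R" and \<psi>: "embedding \<psi> G R UNIV pairs_rel"
begin

lemma rel_in_carrier: "(x, y) \<in> R \<Longrightarrow> x \<in> G \<and> y \<in> G"
  using equiv unfolding equiv_def refl_on_def by blast

lemma rel_refl: "x \<in> G \<Longrightarrow> (x, x) \<in> R"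
  using equiv unfolding equiv_def refl_on_def by blast

lemma rel_sym: "(x, y) \<in> R \<Longrightarrow> (y, x) \<in> R"
  using equiv unfolding equiv_def sym_def by blast

lemma rel_trans: "(x, y) \<in> R \<Longrightarrow> (y, z) \<in> R \<Longrightarrow> (x, z) \<in> R"
  using equiv unfolding equiv_def trans_def by blast

lemma rel_classes_small:
  assumes "(x, y) \<in> R" "(x, z) \<in> R" shows "x = y \<or> x = z \<or> y = z"
proof -
  have G: "x \<in> G" "y \<in> G" "z \<in> G" using assms rel_in_carrier by auto
  then have "(\<psi> x, \<psi> y) \<in> pairs_rel" "(\<psi> x, \<psi> z) \<in> pairs_rel"
    using \<psi> assms unfolding embedding_def by auto
  then have "\<psi> x = \<psi> y \<or> \<psi> x = \<psi> z \<or> \<psi> y = \<psi> z"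
    by (rule pair_equiv_small[OF pair_equiv_pairs_rel])
  then show ?thesis using \<psi> G unfolding embedding_def by (metis inj_onD)
qed

lemma computable_rel_fun2: "computable_fun2 (\<lambda>x y. of_bool ((x, y) \<in> R))"
  using computable by (rule computable_fun2_of_rel)

definition class_min :: "nat \<Rightarrow> nat" where
  "class_min x = (LEAST y. (y, x) \<in> R \<or> y = x)"

definition to_pairs :: "nat \<Rightarrow> nat" where
  "to_pairs x = npair (if class_min x = x then 1 else 2) (class_min x)"

lemma class_min_eq: "x \<in> G \<Longrightarrow> class_min x = (LEAST y. (y, x) \<in> R)"
  unfolding class_min_def by (metis rel_refl)

lemma class_min_rel: "x \<in> G \<Longrightarrow> (class_min x, x) \<in> R"
  using class_min_eq rel_refl by (metis LeastI)

lemma class_min_eq_iff: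
  assumes "x \<in> G" "y \<in> G" shows "class_min x = class_min y \<longleftrightarrow> (x, y) \<in> R"
proof
  assume "class_min x = class_min y"
  then show "(x, y) \<in> R" using class_min_rel assms rel_sym rel_trans by metis
next
  assume "(x, y) \<in> R"
  then have "(z, x) \<in> R \<longleftrightarrow> (z, y) \<in> R" for z using rel_sym rel_trans by blast
  then show "class_min x = class_min y" using assms by (simp add: class_min_eq)
qed

lemma computable_to_pairs: "computable_fun to_pairs"
proof -
  have "computable_fun class_min"
    unfolding class_min_def using computable_rel_fun2
    by (intro computable_Least computable_fun2I[where e="EOr (ECall2 (\<lambda>x y. of_bool ((x, y) \<in> R))
        (EVar 1) (EVar 0)) (EEq (EVar 1) (EVar 0))"]) auto
  then show ?thesis
    by (intro computable_funI[where e="ECall2 npair (EIf (EEq (ECall1 class_min (EVar 0)) (EVar 0))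
        (EConst 2) (EConst 1)) (ECall1 class_min (EVar 0))"]) (simp_all add: to_pairs_def)
qed

lemma embedding_to_pairs: "embedding to_pairs G R UNIV pairs_rel"
proof -
  have "(x, y) \<in> R \<longleftrightarrow> (to_pairs x, to_pairs y) \<in> pairs_rel" if "x \<in> G" "y \<in> G" for x y
    using class_min_eq_iff[OF that] by (auto simp: to_pairs_def pairs_rel_def paired_def)
  moreover have "inj_on to_pairs G"
  proof (rule inj_onI)
    fix x y assume G: "x \<in> G" "y \<in> G" and eq: "to_pairs x = to_pairs y"
    then have m: "class_min x = class_min y" and "class_min x = x \<longleftrightarrow> class_min y = y"
      by (auto simp: to_pairs_def split: if_splits)
    then show "x = y"
      using rel_classes_small[OF class_min_rel[OF G(1)]] class_min_rel[OF G(2)] by (metis (full_types))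
  qed
  ultimately show ?thesis unfolding embedding_def by auto
qed

text \<open>Every element of \<open>pairs_rel\<close> is assigned its own two-element class of the
  structure (the members of a pair share one), found by enumerating the codes \<open>npair p q\<close>,
  \<open>p < q\<close>, of such classes; infinitely many exist because \<open>\<phi>\<close> is an embedding.\<close>

definition pair_code :: "nat \<Rightarrow> bool" where
  "pair_code z \<longleftrightarrow> nfst z < nsnd z \<and> (nfst z, nsnd z) \<in> R"

lemma infinite_pair_codes: "infinite {z. pair_code z}"
proof -
  define a where "a k = \<phi> (npair 1 k)" for k
  define b where "b k = \<phi> (npair 2 k)" for k
  have inj: "inj \<phi>" using \<phi> unfolding embedding_def by simp
  have ab: "a k \<noteq> b k" "(a k, b k) \<in> R" for k
  proof -
    have "(npair 1 k, npair 2 k) \<in> pairs_rel" by (simp add: pairs_rel_def paired_def)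
    then show "a k \<noteq> b k" "(a k, b k) \<in> R"
      using \<phi> inj unfolding a_def b_def embedding_def by (auto simp: inj_eq)
  qed
  define code where "code k = npair (min (a k) (b k)) (max (a k) (b k))" for k
  have "inj code"
  proof (rule injI)
    fix k k' assume "code k = code k'"
    then have "a k = a k' \<or> a k = b k'" by (simp add: code_def min_def max_def split: if_splits)
    then show "k = k'" using inj by (auto simp: a_def b_def inj_eq)
  qed
  moreover have "pair_code (code k)" for k
    using ab[of k] rel_sym[of "a k" "b k"] by (auto simp: code_def pair_code_def min_def max_def)
  then have "range code \<subseteq> {z. pair_code z}" by auto
  ultimately show ?thesis using range_inj_infinite infinite_super by blast
qed

definition next_pair :: "nat \<Rightarrow> nat" where
  "next_pair w = (LEAST z. w \<le> z \<and> pair_code z)"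

definition pair_enum :: "nat \<Rightarrow> nat" where
  "pair_enum k = ((next_pair \<circ> Suc) ^^ k) (next_pair 0)"

lemma ex_pair_code_above: "\<exists>z. w \<le> z \<and> pair_code z"
  using infinite_pair_codes by (simp add: infinite_nat_iff_unbounded_le)

lemma next_pair: "w \<le> next_pair w" "pair_code (next_pair w)"
proof -
  note ex_pair_code_above[of w]
  then show "w \<le> next_pair w" "pair_code (next_pair w)"
    unfolding next_pair_def by (metis (mono_tags, lifting) LeastI_ex)+
qed

lemma pair_code_pair_enum: "pair_code (pair_enum k)"
  by (cases k) (simp_all add: pair_enum_def next_pair)

lemma inj_pair_enum: "inj pair_enum"
proof -
  have "pair_enum k < pair_enum (Suc k)" for k
    using next_pair(1)[of "Suc (pair_enum k)"] by (simp add: pair_enum_def)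
  then show ?thesis by (intro strict_mono_imp_inj_on) (simp add: strict_mono_Suc_iff)
qed

lemma computable_pair_enum: "computable_fun pair_enum"
proof -
  have "computable_fun next_pair"
    unfolding next_pair_def using computable_rel_fun2
    by (intro computable_Least computable_fun2I[where e="EAnd (ENot (ELess (EVar 1) (EVar 0)))
        (EAnd (ELess (ECall1 nfst (EVar 1)) (ECall1 nsnd (EVar 1)))
          (ECall2 (\<lambda>x y. of_bool ((x, y) \<in> R)) (ECall1 nfst (EVar 1)) (ECall1 nsnd (EVar 1))))"])
      (simp_all add: pair_code_def not_less ex_pair_code_above[unfolded pair_code_def])
  then show ?thesis
    by (intro computable_funI[where e="EIter (ECall1 next_pair (EAdd (EVar 0) (EConst 1))) (EVar 0)
        (ECall1 next_pair (EConst 0))"]) (simp_all add: pair_enum_def o_def)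
qed

lemma pair_code_class:
  assumes "pair_code z" "u \<in> {nfst z, nsnd z}" "v \<in> {nfst z, nsnd z}"
  shows "(u, v) \<in> R"
proof -
  have pq: "(nfst z, nsnd z) \<in> R" using assms(1) by (simp add: pair_code_def)
  moreover have "(nsnd z, nfst z) \<in> R" using pq by (rule rel_sym)
  moreover have "(nfst z, nfst z) \<in> R" "(nsnd z, nsnd z) \<in> R"
    using rel_refl rel_in_carrier[OF pq] by auto
  ultimately show ?thesis using assms(2,3) by auto
qed

lemma pair_code_rel:
  assumes z: "pair_code z" "pair_code z'" and u: "u \<in> {nfst z, nsnd z}" and v: "v \<in> {nfst z', nsnd z'}"
  shows "(u, v) \<in> R \<longleftrightarrow> z = z'"
proof
  assume "z = z'"
  then show "(u, v) \<in> R" using pair_code_class[OF z(1) u] v by simp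
next
  assume uv: "(u, v) \<in> R"
  have zz: "(nfst z, nsnd z) \<in> R" "nfst z < nsnd z" "nfst z' < nsnd z'" "(nfst z', nsnd z') \<in> R"
    using z by (simp_all add: pair_code_def)
  have "(nfst z, u) \<in> R" using pair_code_class[OF z(1) _ u] by simp
  moreover have "(v, nfst z') \<in> R" using pair_code_class[OF z(2) v] by simp
  ultimately have c: "(nfst z, nfst z') \<in> R" using rel_trans[OF _ rel_trans[OF uv]] by blast
  have d: "(nfst z, nsnd z') \<in> R" using rel_trans[OF c zz(4)] .
  have "nfst z' = nfst z \<or> nfst z' = nsnd z" "nsnd z' = nfst z \<or> nsnd z' = nsnd z"
    using rel_classes_small[OF zz(1) c] rel_classes_small[OF zz(1) d] zz(2) by auto
  then have "nfst z' = nfst z \<and> nsnd z' = nsnd z" using zz(2,3) by auto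
  then show "z = z'" by (metis npair_nfst_nsnd)
qed

definition slot :: "nat \<Rightarrow> nat" where
  "slot x = (if nfst x = 1 \<or> nfst x = 2 then 2 * nsnd x + 1 else 2 * x)"

definition from_pairs :: "nat \<Rightarrow> nat" where
  "from_pairs x = (if nfst x = 2 then nsnd else nfst) (pair_enum (slot x))"

lemma slot_eq_iff: "slot x = slot y \<longleftrightarrow> (x, y) \<in> pairs_rel"
  by (auto simp: slot_def pairs_rel_def paired_def) presburger+

lemma from_pairs_member: "from_pairs x \<in> {nfst (pair_enum (slot x)), nsnd (pair_enum (slot x))}"
  by (simp add: from_pairs_def)

lemma from_pairs_rel: "(from_pairs x, from_pairs y) \<in> R \<longleftrightarrow> (x, y) \<in> pairs_rel"
  using pair_code_rel[OF pair_code_pair_enum pair_code_pair_enum from_pairs_member from_pairs_member]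
  by (simp add: inj_eq[OF inj_pair_enum] slot_eq_iff)

lemma computable_from_pairs: "computable_fun from_pairs"
proof -
  let ?slot = "EIf (EOr (EEq (ECall1 nfst (EVar 0)) (EConst 1)) (EEq (ECall1 nfst (EVar 0)) (EConst 2)))
    (EMult (EConst 2) (EVar 0)) (EAdd (EMult (EConst 2) (ECall1 nsnd (EVar 0))) (EConst 1))"
  show ?thesis
    using computable_pair_enum
    by (intro computable_funI[where e="EIf (EEq (ECall1 nfst (EVar 0)) (EConst 2))
        (ECall1 nfst (ECall1 pair_enum ?slot)) (ECall1 nsnd (ECall1 pair_enum ?slot))"])
      (simp_all add: from_pairs_def slot_def)
qed

lemma embedding_from_pairs: "embedding from_pairs UNIV pairs_rel G R"
proof -
  have G: "from_pairs x \<in> G" for x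
    using from_pairs_member[of x] pair_code_pair_enum[of "slot x"] rel_in_carrier
    by (auto simp: pair_code_def)
  have "inj from_pairs"
  proof (rule injI)
    fix x y assume eq: "from_pairs x = from_pairs y"
    then have "(x, y) \<in> pairs_rel" using from_pairs_rel rel_refl G by metis
    then have "slot x = slot y" by (simp add: slot_eq_iff)
    moreover have "nfst (pair_enum (slot x)) \<noteq> nsnd (pair_enum (slot x))"
      using pair_code_pair_enum[of "slot x"] by (simp add: pair_code_def)
    ultimately have "nfst x = 2 \<longleftrightarrow> nfst y = 2" using eq by (auto simp: from_pairs_def split: if_splits)
    with \<open>(x, y) \<in> pairs_rel\<close> show "x = y"
      by (auto simp: pairs_rel_def paired_def nat_eq_iff_nfst_nsnd[of x])
  qed
  then show ?thesis using G from_pairs_rel by (auto simp: embedding_def inj_on_def inj_def)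
qed

end

lemma comp_bi_emb_categorical_pairs_rel: "comp_bi_emb_categorical UNIV pairs_rel"
  unfolding comp_bi_emb_categorical_def
proof (intro allI impI)
  fix G R assume "computable_eq_struct G R" "bi_embeddable UNIV pairs_rel G R"
  then obtain \<phi> \<psi> where "equiv G R" "computable_rel R"
    "embedding \<phi> UNIV pairs_rel G R" "embedding \<psi> G R UNIV pairs_rel"
    unfolding computable_eq_struct_def eq_struct_def bi_embeddable_def by blast
  then show "comp_bi_embeddable UNIV pairs_rel G R"
    unfolding comp_bi_embeddable_def
    using computable_from_pairs embedding_from_pairs computable_to_pairs embedding_to_pairs by blast
qed

theorem corollary2p7:
  shows "\<exists>A E. computable_eq_struct A E \<and> comp_bi_emb_categorical A E \<and> \<not> comp_categorical A E"
  using computable_eq_struct_pairs_rel comp_bi_emb_categorical_pairs_rel not_comp_categorical_pairs_rel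
  by blast

end
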